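(* Let $\alpha>1$ and let $X,X_1,X_2,\dots$ be independent, identically distributed random variables in a sub-linear expectation space $(\Omega,\mathcal H,\mathbb E)$, with partial sums $S_n=\sum_{k=1}^nX_k$. Suppose that $$\mathbb E\Big\{\exp\big\{(\log^+|X|)^\alpha\big\}\Big\}\le C_{\mathbb V}\Big\{\exp\big\{(\log^+|X|)^\alpha\big\}\Big\}<\infty\quad\text{and}\quad \mathbb E(X)=\mathbb E(-X)=0.$$ Then $$\sum_{n=1}^\infty \exp\{(\log n)^\alpha\}\frac{(\log n)^{\alpha-1}}{n^2}\,\mathbb V\{|S_n|>n\varepsilon\}<\infty\quad\text{for all }\varepsilon>1.$$
   Context: $(\Omega,\mathcal H,\mathbb E)$ is a sub-linear expectation space: $\mathcal H$ is a set of random variables on a measurable space $(\Omega,\mathcal F)$ closed under composition with locally Lipschitz functions $\varphi$ (i.e. $|\varphi(x)-\varphi(y)|\le C(1+|x|^m+|y|^m)|x-y|$), and $\mathbb E:\mathcal H\to[-\infty,\infty]$ is monotone, constant-preserving, positively homogeneous and sub-additive. $\mathbb E$ is assumed regular ($X_n\downarrow0$ pointwise implies $\mathbb E(X_n)\to0$) and countably sub-additive ($0\le X\le\sum_n X_n$, $X_n\ge0$ implies $\mathbb E(X)\le\sum_n\mathbb E(X_n)$). By regularity there is a family $\mathcal P$ of probability measures with $\mathbb E(X)=\sup_{P\in\mathcal P}E_P(X)$; set $\bar{\mathbb E}(X)=\sup_{P\in\mathcal P}E_P(X)$ for Borel $X$ and the capacity $\mathbb V(A)=\bar{\mathbb E}(I_A)$.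 The Choquet integral is $C_{\mathbb V}(X)=\int_0^\infty\mathbb V(X>x)\,dx+\int_{-\infty}^0(\mathbb V(X>x)-1)\,dx$. Independence: $Y$ is independent of $X=(X_1,\dots,X_m)$ if $\mathbb E[\psi(X,Y)]=\mathbb E[\mathbb E[\psi(x,Y)]|_{x=X}]$ for all locally Lipschitz $\psi$; a sequence is independent if $X_{n+1}$ is independent of $(X_1,\dots,X_n)$ for each $n$. Identically distributed: $\mathbb E[\psi(X_i)]=\mathbb E[\psi(X_1)]$ for all locally Lipschitz $\psi$ (whenever finite). Throughout, $\log n$ means $\log^+ n=\max(\log n,0)$. *)

theory Defs
  imports "HOL-Probability.Probability"
begin

definition lnorm :: "real list \<Rightarrow> real" where
  "lnorm xs = sqrt (\<Sum>x\<leftarrow>xs. x ^ 2)"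

definition loc_lip :: "nat \<Rightarrow> (real list \<Rightarrow> real) \<Rightarrow> bool" where
  "loc_lip k \<phi> \<longleftrightarrow> (\<exists>C (m::nat). \<forall>x y. length x = k \<longrightarrow> length y = k \<longrightarrow>
      \<bar>\<phi> x - \<phi> y\<bar> \<le> C * (1 + lnorm x ^ m + lnorm y ^ m) * lnorm (map2 (-) x y))"

definition sublinear_expectation_space ::
  "'a measure \<Rightarrow> ('a \<Rightarrow> real) set \<Rightarrow> (('a \<Rightarrow> real) \<Rightarrow> ereal) \<Rightarrow> bool" where
  "sublinear_expectation_space M H E \<longleftrightarrow>
     H \<subseteq> borel_measurable M \<and>
     (\<forall>Xs \<phi>. set Xs \<subseteq> H \<longrightarrow> loc_lip (length Xs) \<phi> \<longrightarrow> (\<lambda>\<omega>. \<phi> (map (\<lambda>X. X \<omega>) Xs)) \<in> H) \<and>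
     (\<forall>X\<in>H. \<forall>Y\<in>H. (\<forall>\<omega>\<in>space M. X \<omega> \<le> Y \<omega>) \<longrightarrow> E X \<le> E Y) \<and>
     (\<forall>c. E (\<lambda>_. c) = ereal c) \<and>
     (\<forall>X\<in>H. \<forall>c>0. E (\<lambda>\<omega>. c * X \<omega>) = ereal c * E X) \<and>
     (\<forall>X\<in>H. \<forall>Y\<in>H. \<not> (E X = \<infinity> \<and> E Y = -\<infinity>) \<and> \<not> (E X = -\<infinity> \<and> E Y = \<infinity>) \<longrightarrow>
        E (\<lambda>\<omega>. X \<omega> + Y \<omega>) \<le> E X + E Y)"

definition regular_sle ::
  "'a measure \<Rightarrow> ('a \<Rightarrow> real) set \<Rightarrow> (('a \<Rightarrow> real) \<Rightarrow> ereal) \<Rightarrow> bool" where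
  "regular_sle M H E \<longleftrightarrow>
     (\<forall>Xn. (\<forall>n. Xn n \<in> H) \<longrightarrow>
        (\<forall>\<omega>\<in>space M. decseq (\<lambda>n. Xn n \<omega>) \<and> (\<lambda>n. Xn n \<omega>) \<longlonglongrightarrow> 0) \<longrightarrow>
        (\<lambda>n. E (Xn n)) \<longlonglongrightarrow> 0)"

definition countably_subadditive ::
  "'a measure \<Rightarrow> ('a \<Rightarrow> real) set \<Rightarrow> (('a \<Rightarrow> real) \<Rightarrow> ereal) \<Rightarrow> bool" where
  "countably_subadditive M H E \<longleftrightarrow>
     (\<forall>X Xn. X \<in> H \<longrightarrow> (\<forall>n. Xn n \<in> H) \<longrightarrow> (\<forall>n. \<forall>\<omega>\<in>space M. 0 \<le> Xn n \<omega>) \<longrightarrow>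
        (\<forall>\<omega>\<in>space M. 0 \<le> X \<omega> \<and> ennreal (X \<omega>) \<le> (\<Sum>n. ennreal (Xn n \<omega>))) \<longrightarrow>
        E X \<le> (\<Sum>n. E (Xn n)))"

definition ext_expect :: "'a measure \<Rightarrow> ('a \<Rightarrow> real) \<Rightarrow> ereal" where
  "ext_expect P X = enn2ereal (\<integral>\<^sup>+ \<omega>. ennreal (X \<omega>) \<partial>P) - enn2ereal (\<integral>\<^sup>+ \<omega>. ennreal (- X \<omega>) \<partial>P)"

definition represents ::
  "'a measure \<Rightarrow> ('a \<Rightarrow> real) set \<Rightarrow> (('a \<Rightarrow> real) \<Rightarrow> ereal) \<Rightarrow> 'a measure set \<Rightarrow> bool" where
  "represents M H E \<P> \<longleftrightarrow> \<P> \<noteq> {} \<and> (\<forall>P\<in>\<P>. prob_space P \<and> sets P = sets M) \<and>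
     (\<forall>X\<in>H. E X = (SUP P\<in>\<P>. ext_expect P X))"

definition capacity :: "'a measure set \<Rightarrow> 'a set \<Rightarrow> ennreal" where
  "capacity \<P> A = (SUP P\<in>\<P>. emeasure P A)"

definition choquet :: "'a measure \<Rightarrow> 'a measure set \<Rightarrow> ('a \<Rightarrow> real) \<Rightarrow> ereal" where
  "choquet M \<P> X =
     enn2ereal (\<integral>\<^sup>+ x\<in>{0..}. capacity \<P> {\<omega>\<in>space M. X \<omega> > x} \<partial>lborel)
   - enn2ereal (\<integral>\<^sup>+ x\<in>{..<0}. (1 - capacity \<P> {\<omega>\<in>space M. X \<omega> > x}) \<partial>lborel)"

text \<open>Extension of E to non-negative random variables outside H by truncation:
  E[Y] = lim_{c->oo} E[min(Y,c)].\<close>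
definition ext_E :: "(('a \<Rightarrow> real) \<Rightarrow> ereal) \<Rightarrow> ('a \<Rightarrow> real) \<Rightarrow> ereal" where
  "ext_E E Y = (SUP c::real. E (\<lambda>\<omega>. min (Y \<omega>) c))"

definition indep_of ::
  "(('a \<Rightarrow> real) \<Rightarrow> ereal) \<Rightarrow> ('a \<Rightarrow> real) list \<Rightarrow> ('a \<Rightarrow> real) \<Rightarrow> bool" where
  "indep_of E Xs Y \<longleftrightarrow>
     (\<forall>\<psi>. loc_lip (Suc (length Xs)) \<psi> \<longrightarrow>
        (\<forall>x. length x = length Xs \<longrightarrow> \<bar>E (\<lambda>\<omega>. \<psi> (x @ [Y \<omega>]))\<bar> \<noteq> \<infinity>) \<longrightarrow>
        E (\<lambda>\<omega>. \<psi> (map (\<lambda>X. X \<omega>) Xs @ [Y \<omega>])) =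
        E (\<lambda>\<omega>. real_of_ereal (E (\<lambda>\<omega>'. \<psi> (map (\<lambda>X. X \<omega>) Xs @ [Y \<omega>'])))))"

definition ident_distr ::
  "(('a \<Rightarrow> real) \<Rightarrow> ereal) \<Rightarrow> ('a \<Rightarrow> real) \<Rightarrow> ('a \<Rightarrow> real) \<Rightarrow> bool" where
  "ident_distr E X Y \<longleftrightarrow>
     (\<forall>\<psi>. loc_lip 1 \<psi> \<longrightarrow>
        (\<bar>E (\<lambda>\<omega>. \<psi> [X \<omega>])\<bar> \<noteq> \<infinity> \<or> \<bar>E (\<lambda>\<omega>. \<psi> [Y \<omega>])\<bar> \<noteq> \<infinity>) \<longrightarrow>
        E (\<lambda>\<omega>. \<psi> [X \<omega>]) = E (\<lambda>\<omega>. \<psi> [Y \<omega>]))"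

definition lnp :: "real \<Rightarrow> real" where
  "lnp t = max (ln t) 0"

end

theory Submission
  imports Defs "HOL-Real_Asymp.Real_Asymp"
begin

(* Write f(x) = exp((log^+ x)^alpha) and w(m) = f(m) (log m)^(alpha - 1) / m^2.  Finiteness of the
   Choquet integral of f(|X|) says that y |-> V(f(|X|) > y) is integrable on [0, oo); in particular
   E X^2 < oo.  Put epsilon = 1 + 3 eta and truncate at b = m^c with c = (7/8)^(1/alpha).  If
   |S_m| > m epsilon, then either
   (1) some |X_k| exceeds m (1 + eta), which has capacity at most m V(f(|X|) > f(m)); or
   (2) two different |X_i|, |X_j| exceed b, which by independence has capacity at most
       m^2 (E phi(X))^2 for a Lipschitz bump phi, and f(b - 1) E phi(X) is bounded by the moment; or
   (3) the X_k clipped to [-b, b] have a sum of modulus > m eta; the exponential Chebyshev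
       inequality with parameter 1/b, independence and E X = E(-X) = 0 bound this by
       2 exp((1 + exp 1) D - eta m / b), where D bounds E X^2.
   Weighted by w(m): (1) is dominated by (f(m) - f(m - 1)) V(f(|X|) > f(m)), which sums to at most
   the Choquet integral; (2) is O(1/m^2) because m^4 w(m) <= f(b - 1)^2 by the choice of c; and
   (3) is O(1/m^2) because eta m / b = eta m^(1 - c) outgrows log(m^2 w(m)) = O((log m)^alpha). *)

section \<open>Locally Lipschitz functions\<close>

lemma lnorm_singleton [simp]: "lnorm [a] = \<bar>a\<bar>"
  by (simp add: lnorm_def)

lemma lnorm_nonneg: "0 \<le> lnorm xs"
  unfolding lnorm_def by (intro real_sqrt_ge_zero sum_list_nonneg) auto

lemma abs_nth_diff_le_lnorm:
  assumes "length x = length y" "i < length x"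
  shows "\<bar>x!i - y!i\<bar> \<le> lnorm (map2 (-) x y)"
proof -
  let ?d = "map2 (-) x y"
  have i: "i < length ?d" and di: "?d ! i = x!i - y!i" using assms by simp_all
  have "(?d!i)^2 \<in> set (map (\<lambda>z. z^2) ?d)"
    using i by (metis length_map nth_map nth_mem)
  moreover have "\<forall>z\<in>set (map (\<lambda>z. z^2) ?d). 0 \<le> z" by auto
  ultimately have "(?d!i)^2 \<le> (\<Sum>z\<leftarrow>?d. z^2)"
    by (metis member_le_sum_list)
  then have "sqrt ((?d!i)^2) \<le> lnorm ?d" unfolding lnorm_def by (rule real_sqrt_le_mono)
  then show ?thesis using di by simp
qed

lemma loc_lip_lipschitz:
  assumes "\<And>x y. \<bar>h x - h y\<bar> \<le> C * \<bar>x - y\<bar>"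
  shows "loc_lip 1 (\<lambda>l. h (hd l))"
  unfolding loc_lip_def
proof (intro exI[of _ "\<bar>C\<bar>"] exI[of _ 0] allI impI)
  fix x y :: "real list" assume "length x = 1" "length y = 1"
  then obtain a b where xy: "x = [a]" "y = [b]"
    by (metis One_nat_def length_0_conv length_Suc_conv)
  have "\<bar>h a - h b\<bar> \<le> \<bar>C\<bar> * \<bar>a - b\<bar>"
    using assms[of a b] by (meson abs_ge_self abs_ge_zero mult_right_mono order_trans)
  also have "\<dots> \<le> \<bar>C\<bar> * 3 * \<bar>a - b\<bar>" by (simp add: mult_right_mono)
  finally show "\<bar>h (hd x) - h (hd y)\<bar> \<le> \<bar>C\<bar> * (1 + lnorm x ^ 0 + lnorm y ^ 0) * lnorm (map2 (-) x y)"
    using xy by simp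
qed

lemma abs_prod_diff_le:
  fixes a b :: "nat \<Rightarrow> real"
  assumes B: "B \<ge> 1" and ab: "\<And>i. i < N \<Longrightarrow> 0 \<le> a i \<and> a i \<le> B \<and> 0 \<le> b i \<and> b i \<le> B"
  shows "\<bar>(\<Prod>i<N. a i) - (\<Prod>i<N. b i)\<bar> \<le> B^N * (\<Sum>i<N. \<bar>a i - b i\<bar>)"
proof -
  have "norm ((\<Prod>i<N. a i / B) - (\<Prod>i<N. b i / B)) \<le> (\<Sum>i<N. norm (a i / B - b i / B))"
    using ab B by (intro norm_prod_diff) auto
  also have "\<dots> \<le> (\<Sum>i<N. \<bar>a i - b i\<bar>)"
  proof (intro sum_mono)
    fix i
    have "norm (a i / B - b i / B) = \<bar>a i - b i\<bar> / B" using B by (simp add: diff_divide_distrib[symmetric])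
    also have "\<dots> \<le> \<bar>a i - b i\<bar>" using B by (simp add: divide_le_eq mult_le_cancel_left1)
    finally show "norm (a i / B - b i / B) \<le> \<bar>a i - b i\<bar>" .
  qed
  finally have *: "\<bar>(\<Prod>i<N. a i) / B^N - (\<Prod>i<N. b i) / B^N\<bar> \<le> (\<Sum>i<N. \<bar>a i - b i\<bar>)"
    by (simp add: prod_dividef)
  have "\<bar>(\<Prod>i<N. a i) - (\<Prod>i<N. b i)\<bar> = B^N * \<bar>(\<Prod>i<N. a i) / B^N - (\<Prod>i<N. b i) / B^N\<bar>"
    using B by (simp add: diff_divide_distrib[symmetric] abs_div)
  also have "\<dots> \<le> B^N * (\<Sum>i<N. \<bar>a i - b i\<bar>)" using * B by (intro mult_left_mono) auto
  finally show ?thesis .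
qed

lemma loc_lip_prod:
  fixes h :: "nat \<Rightarrow> real \<Rightarrow> real"
  assumes hb: "\<And>k x. 0 \<le> h k x \<and> h k x \<le> B"
    and hl: "\<And>k x y. \<bar>h k x - h k y\<bar> \<le> L * \<bar>x - y\<bar>"
  shows "loc_lip N (\<lambda>l. \<Prod>i<length l. h (Suc i) (l!i))"
  unfolding loc_lip_def
proof (intro exI[of _ "(max B 1)^N * \<bar>L\<bar> * N"] exI[of _ 0] allI impI)
  fix x y :: "real list" assume l: "length x = N" "length y = N"
  let ?B = "max B 1" and ?d = "lnorm (map2 (-) x y)"
  have "\<bar>(\<Prod>i<N. h (Suc i) (x!i)) - (\<Prod>i<N. h (Suc i) (y!i))\<bar>
      \<le> ?B^N * (\<Sum>i<N. \<bar>h (Suc i) (x!i) - h (Suc i) (y!i)\<bar>)"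
    using hb by (intro abs_prod_diff_le) (auto simp: le_max_iff_disj)
  also have "\<dots> \<le> ?B^N * (\<Sum>i<N. \<bar>L\<bar> * ?d)"
  proof (intro mult_left_mono sum_mono)
    fix i assume i: "i \<in> {..<N}"
    have "\<bar>h (Suc i) (x!i) - h (Suc i) (y!i)\<bar> \<le> \<bar>L\<bar> * \<bar>x!i - y!i\<bar>"
      using hl[of "Suc i" "x!i" "y!i"] by (meson abs_ge_self abs_ge_zero mult_right_mono order_trans)
    also have "\<dots> \<le> \<bar>L\<bar> * ?d"
      using abs_nth_diff_le_lnorm[of x y i] l i by (intro mult_left_mono) auto
    finally show "\<bar>h (Suc i) (x!i) - h (Suc i) (y!i)\<bar> \<le> \<bar>L\<bar> * ?d" .
  qed simp
  also have "\<dots> \<le> ?B^N * \<bar>L\<bar> * N * (1 + lnorm x ^ 0 + lnorm y ^ 0) * ?d"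
    using lnorm_nonneg[of "map2 (-) x y"] by (simp add: mult_right_mono)
  finally show "\<bar>(\<Prod>i<length x. h (Suc i) (x!i)) - (\<Prod>i<length y. h (Suc i) (y!i))\<bar>
      \<le> ?B^N * \<bar>L\<bar> * real N * (1 + lnorm x ^ 0 + lnorm y ^ 0) * ?d"
    using l by simp
qed

section \<open>Real-variable estimates\<close>

definition exp_lnp_powr :: "real \<Rightarrow> real \<Rightarrow> real" where
  "exp_lnp_powr a x = exp (lnp x powr a)"

lemma lnp_nonneg: "0 \<le> lnp x"
  by (simp add: lnp_def)

lemma lnp_eq_ln: "x \<ge> 1 \<Longrightarrow> lnp x = ln x"
  by (simp add: lnp_def)

lemma lnp_mono: "0 \<le> x \<Longrightarrow> x \<le> y \<Longrightarrow> lnp x \<le> lnp y"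
  by (cases "x = 0") (auto simp: lnp_def max_def)

lemma exp_lnp_powr_ge_1: "1 \<le> exp_lnp_powr a x"
  by (simp add: exp_lnp_powr_def lnp_nonneg)

lemma exp_lnp_powr_pos: "0 < exp_lnp_powr a x"
  by (simp add: exp_lnp_powr_def)

lemma exp_lnp_powr_mono: "0 < a \<Longrightarrow> 0 \<le> x \<Longrightarrow> x \<le> y \<Longrightarrow> exp_lnp_powr a x \<le> exp_lnp_powr a y"
  unfolding exp_lnp_powr_def by (simp add: lnp_mono lnp_nonneg powr_mono2)

lemma exp_lnp_powr_strict_mono: "0 < a \<Longrightarrow> 1 \<le> x \<Longrightarrow> x < y \<Longrightarrow> exp_lnp_powr a x < exp_lnp_powr a y"
  unfolding exp_lnp_powr_def using lnp_eq_ln[of x] lnp_eq_ln[of y] by (simp add: powr_less_mono2)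

lemma exp_lnp_powr_eq: "x \<ge> 1 \<Longrightarrow> exp_lnp_powr a x = exp (ln x powr a)"
  by (simp add: exp_lnp_powr_def lnp_eq_ln)

lemma power2_le_exp_lnp_powr:
  assumes a: "a > 1"
  obtains K :: nat where "\<And>x. x^2 \<le> real K + exp_lnp_powr a \<bar>x\<bar>"
proof -
  define R where "R = exp (2 powr (1 / (a - 1)))"
  have R1: "R \<ge> 1" unfolding R_def by simp
  obtain K :: nat where K: "R^2 \<le> real K" by (meson real_nat_ceiling_ge)
  have "x^2 \<le> real K + exp_lnp_powr a \<bar>x\<bar>" for x
  proof (cases "\<bar>x\<bar> \<le> R")
    case True
    then have "x^2 \<le> R^2" by (metis abs_ge_zero abs_le_square_iff power2_abs power_mono)
    then show ?thesis using K exp_lnp_powr_ge_1[of a "\<bar>x\<bar>"] by linarith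
  next
    case False
    then have x1: "\<bar>x\<bar> \<ge> 1" using R1 by simp
    have "ln (exp (2 powr (1 / (a - 1)))) < ln \<bar>x\<bar>" using False x1 unfolding R_def
      by (subst ln_less_cancel_iff) auto
    then have lnx: "ln \<bar>x\<bar> > 2 powr (1 / (a - 1))" by simp
    then have lnx0: "ln \<bar>x\<bar> > 0" using powr_gt_zero[of 2 "1 / (a - 1)"] by linarith
    have "(2 powr (1 / (a - 1))) powr (a - 1) \<le> ln \<bar>x\<bar> powr (a - 1)"
      using lnx a by (intro powr_mono2) auto
    then have "2 \<le> ln \<bar>x\<bar> powr (a - 1)" using a by (simp add: powr_powr)
    then have "2 * ln \<bar>x\<bar> \<le> ln \<bar>x\<bar> powr (a - 1) * ln \<bar>x\<bar>" using lnx0 by (simp add: mult_right_mono)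
    also have "\<dots> = ln \<bar>x\<bar> powr a" using lnx0 powr_add[of "ln \<bar>x\<bar>" "a - 1" 1] by simp
    finally have "exp (2 * ln \<bar>x\<bar>) \<le> exp_lnp_powr a \<bar>x\<bar>" using exp_lnp_powr_eq[OF x1] by simp
    moreover have "exp (2 * ln \<bar>x\<bar>) = x^2"
      using x1 exp_double[of "ln \<bar>x\<bar>"] by simp
    ultimately show ?thesis by simp
  qed
  then show ?thesis using that by blast
qed

definition weight :: "real \<Rightarrow> real \<Rightarrow> real" where
  "weight a x = exp_lnp_powr a x * lnp x powr (a - 1) / x^2"

lemma weight_nonneg: "0 \<le> weight a x"
  by (simp add: weight_def exp_lnp_powr_pos less_imp_le)

lemma eventually_weight_le_increment:
  assumes a: "a > 1"
  shows "eventually (\<lambda>x. x * weight a x \<le> 2 / a * (exp_lnp_powr a x - exp_lnp_powr a (x - 1))) at_top"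
proof -
  have "eventually (\<lambda>x::real. exp (ln x powr a) * ln x powr (a - 1) / x
      \<le> 2 / a * (exp (ln x powr a) - exp (ln (x - 1) powr a))) at_top"
    using a by real_asymp
  then show ?thesis using eventually_ge_at_top[of "2::real"]
    by eventually_elim (simp add: weight_def exp_lnp_powr_eq lnp_eq_ln power2_eq_square)
qed

lemma eventually_weight_exp_le:
  assumes "a > 1" "0 < c" "c < 1" "\<eta> > 0"
  shows "eventually (\<lambda>x. 2 * x^2 * weight a x * exp (C - \<eta> * (x / x powr c)) \<le> 1) at_top"
proof -
  have "eventually (\<lambda>x::real. 2 * exp (ln x powr a) * ln x powr (a - 1) * exp (C - \<eta> * (x / x powr c)) \<le> 1) at_top"
    using assms by real_asymp
  then show ?thesis using eventually_ge_at_top[of "1::real"]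
    by eventually_elim (simp add: weight_def exp_lnp_powr_eq lnp_eq_ln)
qed

lemma ln_powr_minus_1_ge: "0 < x \<Longrightarrow> 2 \<le> x powr c \<Longrightarrow> c * ln x - ln 2 \<le> ln (x powr c - 1)"
  for x c :: real
proof -
  assume x: "0 < x" and b: "2 \<le> x powr c"
  have "ln (x powr c / 2) \<le> ln (x powr c - 1)" using b by (subst ln_le_cancel_iff) auto
  then show ?thesis using b x by (simp add: ln_div ln_powr)
qed

lemma eventually_weight_le_square:
  assumes a: "a > 1" and c: "c > 0" "c powr a = 7/8"
  shows "eventually (\<lambda>x. 2 \<le> x powr c \<and> x^4 * weight a x \<le> (exp_lnp_powr a (x powr c - 1))^2) at_top"
proof -
  txt \<open>With \<open>L = ln x\<close> the claim reads \<open>L^a + (a - 1) ln L + 2 L \<le> 2 (c L - ln 2)^a = 7/4 (L - d)^a\<close>.\<close>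
  define d where "d = ln 2 / c"
  have d: "d > 0" "c * d = ln 2" unfolding d_def using c by simp_all
  have "eventually (\<lambda>L::real. L powr a + (a - 1) * ln L + 2 * L \<le> 7/4 * (L - d) powr a) at_top"
    using a d by real_asymp
  then have "eventually (\<lambda>L::real. L powr a + (a - 1) * ln L + 2 * L \<le> 7/4 * (L - d) powr a
      \<and> d + 1 \<le> L) at_top"
    using eventually_ge_at_top[of "d + 1"] by eventually_elim auto
  then have "eventually (\<lambda>x. ln x powr a + (a - 1) * ln (ln x) + 2 * ln x \<le> 7/4 * (ln x - d) powr a
      \<and> d + 1 \<le> ln x) at_top"
    by (rule eventually_compose_filterlim[OF _ ln_at_top])
  then show ?thesis using eventually_ge_at_top[of "1::real"]
  proof eventually_elim
    case (elim x)
    define L where "L = ln x"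
    have LP: "L powr a + (a - 1) * ln L + 2 * L \<le> 7/4 * (L - d) powr a" "d + 1 \<le> L"
      using elim(1) unfolding L_def by auto
    have x: "x > 0" "x \<noteq> 1" using elim(2) LP(2) d unfolding L_def by auto
    have cL: "ln 2 \<le> c * L" using LP(2) c d by (smt (verit) mult_left_mono)
    have "x powr c = exp (c * L)" using x by (simp add: L_def powr_def)
    then have b: "2 \<le> x powr c" using cL by (metis exp_le_cancel_iff exp_ln_iff zero_less_numeral)
    have "7/8 * (L - d) powr a = (c * (L - d)) powr a"
      using c LP(2) d by (simp add: powr_mult)
    also have "\<dots> \<le> ln (x powr c - 1) powr a"
    proof (rule powr_mono2)
      show "c * (L - d) \<le> ln (x powr c - 1)"
        using ln_powr_minus_1_ge[OF x(1) b] d by (simp add: L_def algebra_simps)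
    qed (use a cL d in \<open>auto simp: algebra_simps\<close>)
    finally have "exp (L powr a + (a - 1) * ln L + 2 * L) \<le> exp (2 * ln (x powr c - 1) powr a)"
      using LP(1) by simp
    moreover have "exp (L powr a + (a - 1) * ln L + 2 * L) = x^4 * weight a x"
      using elim(2) x
      by (simp add: L_def weight_def exp_lnp_powr_eq lnp_eq_ln exp_add powr_def exp_double
          power2_eq_square power4_eq_xxxx)
    moreover have "exp (2 * ln (x powr c - 1) powr a) = (exp_lnp_powr a (x powr c - 1))^2"
      using b by (simp add: exp_lnp_powr_eq exp_double)
    ultimately show ?case using b by simp
  qed
qed

lemma le_powr_square: "1 \<le> x \<Longrightarrow> 1/2 \<le> c \<Longrightarrow> x \<le> (x powr c)^2" for x c :: real
proof -
  assume x: "1 \<le> x" and c: "1/2 \<le> c"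
  have "x powr 1 \<le> x powr (2 * c)" using x c by (intro powr_mono) auto
  then show ?thesis using x by (simp add: powr_add[symmetric] power2_eq_square)
qed

definition clip :: "real \<Rightarrow> real \<Rightarrow> real" where
  "clip b x = max (- b) (min b x)"

text \<open>A Lipschitz stand-in for the indicator of \<open>{|x| > r}\<close>, vanishing on \<open>|x| \<le> r - 1\<close>:
  sub-linear expectations are only available for Lipschitz transforms.\<close>
definition bump :: "real \<Rightarrow> real \<Rightarrow> real" where
  "bump r x = min 1 (max 0 (\<bar>x\<bar> - r + 1))"

lemma clip_lipschitz: "\<bar>clip b x - clip b y\<bar> \<le> 1 * \<bar>x - y\<bar>"
  unfolding clip_def by (auto simp: max_def min_def abs_if)

lemma abs_clip_le: "b \<ge> 0 \<Longrightarrow> \<bar>clip b x\<bar> \<le> b"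
  unfolding clip_def by (auto simp: max_def min_def abs_if)

lemma clip_sign: "b \<ge> 0 \<Longrightarrow> s \<in> {1, -1} \<Longrightarrow> clip b (s * x) = s * clip b x"
  unfolding clip_def by (auto simp: max_def min_def)

lemma clip_eq: "\<bar>x\<bar> \<le> b \<Longrightarrow> clip b x = x"
  unfolding clip_def by (auto simp: max_def min_def)

lemma abs_diff_clip_le: "b \<ge> 0 \<Longrightarrow> \<bar>x - clip b x\<bar> \<le> \<bar>x\<bar>"
  unfolding clip_def by (auto simp: max_def min_def abs_if)

lemma bump_lipschitz: "\<bar>bump r x - bump r y\<bar> \<le> 1 * \<bar>x - y\<bar>"
  unfolding bump_def by (auto simp: max_def min_def abs_if)

lemma bump_bounds: "0 \<le> bump r x" "bump r x \<le> 1"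
  unfolding bump_def by auto

lemma bump_eq_1: "\<bar>x\<bar> > r \<Longrightarrow> bump r x = 1"
  unfolding bump_def by auto

lemma bump_pos_imp: "bump r x > 0 \<Longrightarrow> \<bar>x\<bar> > r - 1"
  unfolding bump_def by (auto simp: max_def min_def split: if_splits)

lemma exp_lipschitz_le:
  fixes u v B :: real
  assumes "u \<le> B" "v \<le> B"
  shows "\<bar>exp u - exp v\<bar> \<le> exp B * \<bar>u - v\<bar>"
proof -
  have *: "exp v - exp u \<le> exp B * (v - u)" if "u \<le> v" "v \<le> B" for u v :: real
  proof -
    have "1 - exp (u - v) \<le> v - u" using exp_ge_add_one_self[of "u - v"] by linarith
    then have "exp v * (1 - exp (u - v)) \<le> exp v * (v - u)" by (intro mult_left_mono) auto
    also have "\<dots> \<le> exp B * (v - u)" using that by (intro mult_right_mono) auto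
    finally show ?thesis by (simp add: algebra_simps exp_diff)
  qed
  show ?thesis using *[of u v] *[of v u] assms by (cases "u \<le> v") auto
qed

lemma exp_le_quadratic: "exp (u::real) \<le> 1 + u + u^2 * exp \<bar>u\<bar>"
proof -
  obtain t where t: "\<bar>t\<bar> \<le> \<bar>u\<bar>" "exp u = (\<Sum>m<2. u^m / fact m) + exp t / fact 2 * u^2"
    using Maclaurin_exp_le[of u 2] by blast
  have "exp u = 1 + u + exp t / 2 * u^2" using t(2) by (simp add: numeral_2_eq_2)
  also have "exp t / 2 * u^2 \<le> exp \<bar>u\<bar> * u^2"
  proof (intro mult_right_mono)
    have "exp t \<le> exp \<bar>u\<bar>" using t(1) by simp
    then show "exp t / 2 \<le> exp \<bar>u\<bar>" using exp_gt_zero[of t] by linarith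
  qed simp
  finally show ?thesis by (simp add: mult.commute)
qed

lemma exp_clip_le:
  assumes t: "t > 0" and b: "b > 0"
  shows "exp (t * clip b y) \<le> 1 + t * y + (t / b + t^2 * exp (t * b)) * y^2"
proof -
  have nn: "0 \<le> t / b * y^2" using t b by simp
  have big: "(t * b)^2 * exp (t * b) \<le> t^2 * exp (t * b) * y^2" if "b \<le> \<bar>y\<bar>"
  proof -
    have "b^2 \<le> y^2" using power_mono[OF that, of 2] b by simp
    then have "t^2 * b^2 * exp (t * b) \<le> t^2 * y^2 * exp (t * b)"
      by (intro mult_right_mono mult_left_mono) auto
    then show ?thesis by (simp add: power_mult_distrib mult.commute mult.left_commute)
  qed
  consider "\<bar>y\<bar> \<le> b" | "y > b" | "y < - b" by linarith
  then show ?thesis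
  proof cases
    case 1
    have "\<bar>t * y\<bar> \<le> t * b" using 1 t by (simp add: abs_mult mult_left_mono)
    then have "t^2 * y^2 * exp \<bar>t * y\<bar> \<le> t^2 * y^2 * exp (t * b)"
      by (intro mult_left_mono) auto
    then have "(t * y)^2 * exp \<bar>t * y\<bar> \<le> t^2 * exp (t * b) * y^2"
      by (simp add: power_mult_distrib mult.commute mult.left_commute)
    then show ?thesis
      using exp_le_quadratic[of "t * y"] clip_eq[OF 1] nn by (simp add: algebra_simps)
  next
    case 2
    have q: "(t * b)^2 * exp (t * b) \<le> t^2 * exp (t * b) * y^2" using big 2 by simp
    have "exp (t * clip b y) = exp (t * b)" using 2 b by (simp add: clip_def)
    also have "\<dots> \<le> 1 + t * b + (t * b)^2 * exp (t * b)" using exp_le_quadratic[of "t * b"] t b by simp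
    also have "\<dots> \<le> 1 + t * y + t^2 * exp (t * b) * y^2"
      using q mult_strict_left_mono[OF 2 t] by linarith
    finally show ?thesis using nn by (simp add: algebra_simps)
  next
    case 3
    have q: "(t * b)^2 * exp (t * b) \<le> t^2 * exp (t * b) * y^2" using big 3 by simp
    have lin: "- (t * b) \<le> t * y + t / b * y^2"
    proof -
      have "y^2 + b * y + b^2 = (y + b/2)^2 + 3/4 * b^2" by (simp add: power2_eq_square algebra_simps)
      then have "0 \<le> t / b * (y^2 + b * y + b^2)" using t b by simp
      then show ?thesis using b by (simp add: algebra_simps power2_eq_square)
    qed
    have "exp (t * clip b y) = exp (- (t * b))" using 3 b by (simp add: clip_def)
    also have "\<dots> \<le> 1 - t * b + (t * b)^2 * exp (t * b)" using exp_le_quadratic[of "- (t * b)"] t b by simp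
    also have "\<dots> \<le> 1 + t * y + t / b * y^2 + t^2 * exp (t * b) * y^2" using q lin by linarith
    finally show ?thesis by (simp add: algebra_simps)
  qed
qed

lemma exp_clip_bounds: "t \<ge> 0 \<Longrightarrow> b \<ge> 0 \<Longrightarrow> 0 \<le> exp (t * clip b x) \<and> exp (t * clip b x) \<le> exp (t * b)"
  using abs_clip_le[of b x] by (simp add: abs_le_iff mult_left_mono)

lemma exp_clip_lipschitz:
  assumes "t \<ge> 0" "b \<ge> 0"
  shows "\<bar>exp (t * clip b x) - exp (t * clip b y)\<bar> \<le> (exp (t * b) * t) * \<bar>x - y\<bar>"
proof -
  have "\<bar>exp (t * clip b x) - exp (t * clip b y)\<bar> \<le> exp (t * b) * \<bar>t * clip b x - t * clip b y\<bar>"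
    using exp_clip_bounds[OF assms] by (intro exp_lipschitz_le) auto
  also have "\<bar>t * clip b x - t * clip b y\<bar> \<le> t * \<bar>x - y\<bar>"
    using clip_lipschitz[of b x y] assms(1)
    by (simp add: abs_mult right_diff_distrib[symmetric] mult_left_mono)
  finally show ?thesis by (simp add: mult_left_mono mult.assoc)
qed

lemma abs_sum_le_abs_sum_clip:
  fixes x :: "nat \<Rightarrow> real"
  assumes K: "finite K" and b: "b \<ge> 0" and R: "R \<ge> 0" "\<And>k. k \<in> K \<Longrightarrow> \<bar>x k\<bar> \<le> R"
    and one_big: "\<And>i j. i \<in> K \<Longrightarrow> j \<in> K \<Longrightarrow> b < \<bar>x i\<bar> \<Longrightarrow> b < \<bar>x j\<bar> \<Longrightarrow> i = j"
  shows "\<bar>\<Sum>k\<in>K. x k\<bar> \<le> \<bar>\<Sum>k\<in>K. clip b (x k)\<bar> + R"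
proof -
  have "\<bar>\<Sum>k\<in>K. x k - clip b (x k)\<bar> \<le> R"
  proof (cases "\<exists>k0\<in>K. b < \<bar>x k0\<bar>")
    case False
    then have "(\<Sum>k\<in>K. x k - clip b (x k)) = 0"
      by (intro sum.neutral) (simp add: clip_eq not_less)
    then show ?thesis using R by simp
  next
    case True
    then obtain k0 where k0: "k0 \<in> K" "b < \<bar>x k0\<bar>" by blast
    have "x k - clip b (x k) = 0" if "k \<in> K - {k0}" for k
    proof -
      have "\<bar>x k\<bar> \<le> b" using one_big[OF _ k0(1) _ k0(2), of k] that by force
      then show ?thesis by (simp add: clip_eq)
    qed
    then have "(\<Sum>k\<in>{k0}. x k - clip b (x k)) = (\<Sum>k\<in>K. x k - clip b (x k))"
      using K k0(1) by (intro sum.mono_neutral_left) auto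
    then show ?thesis using abs_diff_clip_le[OF b, of "x k0"] R(2)[OF k0(1)] by simp
  qed
  moreover have "(\<Sum>k\<in>K. x k) = (\<Sum>k\<in>K. clip b (x k)) + (\<Sum>k\<in>K. x k - clip b (x k))"
    by (simp add: sum.distrib[symmetric])
  ultimately show ?thesis
    using abs_triangle_ineq[of "\<Sum>k\<in>K. clip b (x k)" "\<Sum>k\<in>K. x k - clip b (x k)"] by linarith
qed

lemma chernoff_factor_le:
  fixes b x D :: real and m :: nat
  assumes b: "b \<ge> 1" and m: "real m \<le> b^2" and D: "D \<ge> 0"
  shows "exp (- (1 / b * x)) * (1 + (1 / b / b + (1 / b)^2 * exp (1 / b * b)) * D)^m
       \<le> exp ((1 + exp 1) * D - x / b)"
proof -
  define y where "y = (1 / b / b + (1 / b)^2 * exp (1 / b * b)) * D"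
  have y: "y = (1 + exp 1) * D / b^2" unfolding y_def using b by (simp add: power2_eq_square field_simps)
  have "(1 + y)^m \<le> exp y ^ m"
    using D unfolding y by (intro power_mono) (auto simp: exp_ge_add_one_self add.commute)
  also have "\<dots> = exp (real m * y)" by (simp add: exp_of_nat_mult)
  also have "\<dots> \<le> exp ((1 + exp 1) * D)"
  proof -
    have "real m * y = (1 + exp 1) * D * (real m / b^2)" unfolding y by simp
    also have "\<dots> \<le> (1 + exp 1) * D" using m b D by (intro mult_left_le) (auto simp: divide_le_eq_1)
    finally show ?thesis by simp
  qed
  finally have "exp (- (1 / b * x)) * (1 + y)^m \<le> exp (- (1 / b * x)) * exp ((1 + exp 1) * D)"
    by (rule mult_left_mono) simp
  also have "\<dots> = exp ((1 + exp 1) * D - x / b)" by (simp add: exp_add[symmetric])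
  finally show ?thesis unfolding y_def .
qed

lemma suminf_ennreal_finite_eventually_le:
  fixes u v :: "nat \<Rightarrow> ennreal"
  assumes le: "eventually (\<lambda>n. u n \<le> v n) sequentially" and u: "\<And>n. u n < \<infinity>"
    and v: "(\<Sum>n. v n) < \<infinity>"
  shows "(\<Sum>n. u n) < \<infinity>"
proof -
  obtain N where N: "\<And>n. n \<ge> N \<Longrightarrow> u n \<le> v n" using le unfolding eventually_sequentially by blast
  have "(\<Sum>n. u n) \<le> (\<Sum>n. v n + (if n < N then u n else 0))"
    using N by (intro suminf_le) (auto simp: not_less)
  also have "\<dots> = (\<Sum>n. v n) + (\<Sum>n. if n < N then u n else 0)"
    by (rule suminf_add[symmetric]) auto
  also have "(\<Sum>n. if n < N then u n else 0) = (\<Sum>n<N. u n)"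
    by (subst suminf_finite[of "{..<N}"]) auto
  finally have "(\<Sum>n. u n) \<le> (\<Sum>n. v n) + (\<Sum>n<N. u n)" .
  moreover have "(\<Sum>n. v n) + (\<Sum>n<N. u n) < \<infinity>" using v u by (simp add: less_top[symmetric])
  ultimately show ?thesis by (rule le_less_trans)
qed

section \<open>Sub-linear expectations and the upper capacity\<close>

locale sublinear_expectation =
  fixes M :: "'a measure" and H :: "('a \<Rightarrow> real) set" and E :: "('a \<Rightarrow> real) \<Rightarrow> ereal"
    and \<P> :: "'a measure set"
  assumes sle: "sublinear_expectation_space M H E" and rep: "represents M H E \<P>"
begin

lemma H_measurable: "Z \<in> H \<Longrightarrow> Z \<in> borel_measurable M"
  using sle unfolding sublinear_expectation_space_def by auto

lemma H_comp: "set Zs \<subseteq> H \<Longrightarrow> loc_lip (length Zs) \<phi> \<Longrightarrow> (\<lambda>\<omega>. \<phi> (map (\<lambda>X. X \<omega>) Zs)) \<in> H"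
  using sle unfolding sublinear_expectation_space_def by auto

lemma E_mono: "Z \<in> H \<Longrightarrow> W \<in> H \<Longrightarrow> (\<And>\<omega>. \<omega> \<in> space M \<Longrightarrow> Z \<omega> \<le> W \<omega>) \<Longrightarrow> E Z \<le> E W"
  using sle unfolding sublinear_expectation_space_def by auto

lemma E_const [simp]: "E (\<lambda>_. c) = ereal c"
  using sle unfolding sublinear_expectation_space_def by auto

lemma E_cmult: "Z \<in> H \<Longrightarrow> c > 0 \<Longrightarrow> E (\<lambda>\<omega>. c * Z \<omega>) = ereal c * E Z"
  using sle unfolding sublinear_expectation_space_def by auto

lemma E_cmult_nonneg: "Z \<in> H \<Longrightarrow> c \<ge> 0 \<Longrightarrow> E (\<lambda>\<omega>. c * Z \<omega>) = ereal c * E Z"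
  by (cases "c = 0") (auto simp: E_cmult zero_ereal_def[symmetric])

lemma E_add_le: "Z \<in> H \<Longrightarrow> W \<in> H \<Longrightarrow> \<bar>E Z\<bar> \<noteq> \<infinity> \<Longrightarrow> E (\<lambda>\<omega>. Z \<omega> + W \<omega>) \<le> E Z + E W"
  using sle unfolding sublinear_expectation_space_def by auto

lemma E_eq_SUP: "Z \<in> H \<Longrightarrow> E Z = (SUP P\<in>\<P>. ext_expect P Z)"
  using rep unfolding represents_def by auto

lemma prob_space_P: "P \<in> \<P> \<Longrightarrow> prob_space P"
  using rep unfolding represents_def by auto

lemma sets_P: "P \<in> \<P> \<Longrightarrow> sets P = sets M"
  using rep unfolding represents_def by auto

lemma space_P: "P \<in> \<P> \<Longrightarrow> space P = space M"
  using sets_P sets_eq_imp_space_eq by blast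

lemma H_lipschitz: "Z \<in> H \<Longrightarrow> (\<And>x y. \<bar>h x - h y\<bar> \<le> C * \<bar>x - y\<bar>) \<Longrightarrow> (\<lambda>\<omega>. h (Z \<omega>)) \<in> H"
  using H_comp[of "[Z]" "\<lambda>l. h (hd l)"] loc_lip_lipschitz[of h C] by simp

lemma H_const: "(\<lambda>_. c) \<in> H"
proof -
  have "loc_lip 0 (\<lambda>_. c)" unfolding loc_lip_def by (auto intro!: exI[of _ 0])
  then show ?thesis using H_comp[of "[]" "\<lambda>_. c"] by simp
qed

lemma H_add: assumes "Z \<in> H" "W \<in> H" shows "(\<lambda>\<omega>. Z \<omega> + W \<omega>) \<in> H"
proof -
  have "loc_lip 2 (\<lambda>l. l!0 + l!1)" unfolding loc_lip_def
  proof (intro exI[of _ "2::real"] exI[of _ "0::nat"] allI impI)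
    fix x y :: "real list" assume l: "length x = 2" "length y = 2"
    have "\<bar>x!0 - y!0\<bar> \<le> lnorm (map2 (-) x y)" "\<bar>x!1 - y!1\<bar> \<le> lnorm (map2 (-) x y)"
      using abs_nth_diff_le_lnorm[of x y] l by auto
    then show "\<bar>x!0 + x!1 - (y!0 + y!1)\<bar> \<le> (2::real) * (1 + lnorm x ^ 0 + lnorm y ^ 0) * lnorm (map2 (-) x y)"
      by auto
  qed
  then show ?thesis using H_comp[of "[Z, W]" "\<lambda>l. l!0 + l!1"] assms by (simp add: numeral_2_eq_2)
qed

lemma H_cmult: "Z \<in> H \<Longrightarrow> (\<lambda>\<omega>. c * Z \<omega>) \<in> H"
  using H_lipschitz[of Z "\<lambda>x. c * x" "\<bar>c\<bar>"] by (simp add: abs_mult flip: right_diff_distrib)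

lemma H_power2: assumes "Z \<in> H" shows "(\<lambda>\<omega>. (Z \<omega>)^2) \<in> H"
proof -
  have "loc_lip 1 (\<lambda>l. (hd l)^2)" unfolding loc_lip_def
  proof (intro exI[of _ "1::real"] exI[of _ "1::nat"] allI impI)
    fix x y :: "real list" assume "length x = 1" "length y = 1"
    then obtain a b where xy: "x = [a]" "y = [b]"
      by (metis One_nat_def length_0_conv length_Suc_conv)
    have "\<bar>a^2 - b^2\<bar> = \<bar>a + b\<bar> * \<bar>a - b\<bar>"
      by (simp add: power2_eq_square abs_mult[symmetric] algebra_simps)
    also have "\<dots> \<le> (1 + \<bar>a\<bar> + \<bar>b\<bar>) * \<bar>a - b\<bar>" by (intro mult_right_mono) auto
    finally show "\<bar>(hd x)^2 - (hd y)^2\<bar> \<le> 1 * (1 + lnorm x ^ 1 + lnorm y ^ 1) * lnorm (map2 (-) x y)"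
      using xy by simp
  qed
  then show ?thesis using H_comp[of "[Z]" "\<lambda>l. (hd l)^2"] assms by simp
qed

lemma E_bounded:
  assumes "Z \<in> H" "\<And>\<omega>. \<omega> \<in> space M \<Longrightarrow> a \<le> Z \<omega> \<and> Z \<omega> \<le> b"
  shows "ereal a \<le> E Z" "E Z \<le> ereal b"
  using E_mono[OF H_const[of a] assms(1)] E_mono[OF assms(1) H_const[of b]] assms(2) by auto

lemma E_bounded_real:
  assumes "Z \<in> H" "\<And>\<omega>. \<omega> \<in> space M \<Longrightarrow> a \<le> Z \<omega> \<and> Z \<omega> \<le> b"
  obtains e where "E Z = ereal e" "a \<le> e" "e \<le> b"
  using E_bounded[OF assms] by (cases "E Z") auto

lemma capacity_le_1: "capacity \<P> A \<le> 1"
  unfolding capacity_def by (rule SUP_least) (simp add: prob_space_P prob_space.emeasure_le_1)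

lemma capacity_less_top: "capacity \<P> A < \<infinity>"
  using capacity_le_1[of A] by (simp add: order_le_less_trans)

lemma capacity_mono: "A \<subseteq> B \<Longrightarrow> B \<in> sets M \<Longrightarrow> capacity \<P> A \<le> capacity \<P> B"
  unfolding capacity_def by (intro SUP_mono) (auto intro!: emeasure_mono bexI simp: sets_P)

lemma capacity_UN_le:
  assumes "finite I" "\<And>i. i \<in> I \<Longrightarrow> A i \<in> sets M"
  shows "capacity \<P> (\<Union>i\<in>I. A i) \<le> (\<Sum>i\<in>I. capacity \<P> (A i))"
  unfolding capacity_def
proof (rule SUP_least)
  fix P assume P: "P \<in> \<P>"
  have "emeasure P (\<Union>i\<in>I. A i) \<le> (\<Sum>i\<in>I. emeasure P (A i))"
    using assms P by (intro emeasure_subadditive_finite) (auto simp: sets_P)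
  also have "\<dots> \<le> (\<Sum>i\<in>I. SUP P\<in>\<P>. emeasure P (A i))"
    using P by (intro sum_mono SUP_upper)
  finally show "emeasure P (\<Union>i\<in>I. A i) \<le> (\<Sum>i\<in>I. SUP P\<in>\<P>. emeasure P (A i))" .
qed

lemma capacity_Un_le:
  assumes "A \<in> sets M" "B \<in> sets M"
  shows "capacity \<P> (A \<union> B) \<le> capacity \<P> A + capacity \<P> B"
  using capacity_UN_le[of "{True, False}" "\<lambda>i. if i then A else B"] assms by (simp add: Un_commute)

lemma capacity_space: "capacity \<P> (space M) = 1"
proof -
  have "\<And>P. P \<in> \<P> \<Longrightarrow> emeasure P (space M) = 1"
    using prob_space_P space_P prob_space.emeasure_space_1 by metis
  moreover have "\<P> \<noteq> {}" using rep unfolding represents_def by auto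
  ultimately show ?thesis unfolding capacity_def by simp
qed

lemma ext_expect_nonneg:
  assumes "P \<in> \<P>" "\<And>\<omega>. \<omega> \<in> space M \<Longrightarrow> 0 \<le> Z \<omega>"
  shows "ext_expect P Z = enn2ereal (\<integral>\<^sup>+ \<omega>. ennreal (Z \<omega>) \<partial>P)"
proof -
  have "(\<integral>\<^sup>+ \<omega>. ennreal (- Z \<omega>) \<partial>P) = (\<integral>\<^sup>+ \<omega>. 0 \<partial>P)"
    using assms by (intro nn_integral_cong) (auto simp: space_P ennreal_neg)
  then show ?thesis unfolding ext_expect_def by (simp add: zero_ennreal.rep_eq)
qed

lemma capacity_le_E:
  assumes Z: "Z \<in> H" and nn: "\<And>\<omega>. \<omega> \<in> space M \<Longrightarrow> 0 \<le> Z \<omega>"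
    and A: "A \<in> sets M" and one: "\<And>\<omega>. \<omega> \<in> A \<Longrightarrow> 1 \<le> Z \<omega>"
    and r: "E Z \<le> ereal r"
  shows "capacity \<P> A \<le> ennreal r"
  unfolding capacity_def
proof (rule SUP_least)
  fix P assume P: "P \<in> \<P>"
  have "emeasure P A = (\<integral>\<^sup>+ \<omega>. indicator A \<omega> \<partial>P)"
    using A P by (simp add: sets_P)
  also have "\<dots> \<le> (\<integral>\<^sup>+ \<omega>. ennreal (Z \<omega>) \<partial>P)"
    by (intro nn_integral_mono) (auto simp: indicator_def one)
  finally have 1: "emeasure P A \<le> (\<integral>\<^sup>+ \<omega>. ennreal (Z \<omega>) \<partial>P)" .
  have "enn2ereal (\<integral>\<^sup>+ \<omega>. ennreal (Z \<omega>) \<partial>P) = ext_expect P Z"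
    using ext_expect_nonneg[OF P nn] by simp
  also have "\<dots> \<le> E Z" using E_eq_SUP[OF Z] P by (auto intro: SUP_upper)
  also have "\<dots> \<le> ereal r" by fact
  finally have "e2ennreal (enn2ereal (\<integral>\<^sup>+ \<omega>. ennreal (Z \<omega>) \<partial>P)) \<le> e2ennreal (ereal r)"
    by (rule e2ennreal_mono)
  then show "emeasure P A \<le> ennreal r" using 1 by simp
qed

lemma E_le_capacity:
  assumes Z: "Z \<in> H" and A: "A \<in> sets M"
    and b: "\<And>\<omega>. \<omega> \<in> space M \<Longrightarrow> 0 \<le> Z \<omega> \<and> Z \<omega> \<le> 1 \<and> (Z \<omega> > 0 \<longrightarrow> \<omega> \<in> A)"
  shows "E Z \<le> enn2ereal (capacity \<P> A)"
  unfolding E_eq_SUP[OF Z]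
proof (rule SUP_least)
  fix P assume P: "P \<in> \<P>"
  have "(\<integral>\<^sup>+ \<omega>. ennreal (Z \<omega>) \<partial>P) \<le> (\<integral>\<^sup>+ \<omega>. indicator A \<omega> \<partial>P)"
    using b by (intro nn_integral_mono) (force simp: space_P[OF P] indicator_def)
  also have "\<dots> = emeasure P A" using A P by (simp add: sets_P)
  also have "\<dots> \<le> capacity \<P> A" unfolding capacity_def using P by (rule SUP_upper)
  finally show "ext_expect P Z \<le> enn2ereal (capacity \<P> A)"
    using ext_expect_nonneg[OF P] b by (simp add: less_eq_ennreal.rep_eq)
qed

lemma E_le_capacity_real:
  assumes "Z \<in> H" "A \<in> sets M" "E Z = ereal e"
    and "\<And>\<omega>. \<omega> \<in> space M \<Longrightarrow> 0 \<le> Z \<omega> \<and> Z \<omega> \<le> 1 \<and> (Z \<omega> > 0 \<longrightarrow> \<omega> \<in> A)"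
  shows "ennreal e \<le> capacity \<P> A"
  using e2ennreal_mono[OF E_le_capacity[OF assms(1,2,4)]] assms(3) by simp

lemma E_exp_clip_le:
  assumes Z: "Z \<in> H" and mean: "E Z = 0" and D: "E (\<lambda>\<omega>. (Z \<omega>)^2) \<le> ereal D"
    and t: "t > 0" and b: "b > 0"
  shows "E (\<lambda>\<omega>. exp (t * clip b (Z \<omega>))) \<le> ereal (1 + (t / b + t^2 * exp (t * b)) * D)"
proof -
  define K where "K = t / b + t^2 * exp (t * b)"
  have K: "K > 0" unfolding K_def using t b by (intro add_pos_pos) auto
  have Z1: "(\<lambda>\<omega>. t * Z \<omega>) \<in> H" and Z2: "(\<lambda>\<omega>. K * (Z \<omega>)^2) \<in> H"
    using H_cmult[OF Z] H_cmult[OF H_power2[OF Z]] by auto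
  have E1: "E (\<lambda>\<omega>. t * Z \<omega>) = 0" using E_cmult[OF Z t] mean by simp
  have "E (\<lambda>\<omega>. exp (t * clip b (Z \<omega>))) \<le> E (\<lambda>\<omega>. 1 + (t * Z \<omega> + K * (Z \<omega>)^2))"
    using exp_clip_le[OF t b] t b
    by (intro E_mono H_lipschitz[OF Z exp_clip_lipschitz] H_add H_const Z1 Z2)
      (auto simp: K_def add.assoc)
  also have "\<dots> \<le> E (\<lambda>_. 1) + E (\<lambda>\<omega>. t * Z \<omega> + K * (Z \<omega>)^2)"
    by (intro E_add_le H_const H_add Z1 Z2) simp
  also have "E (\<lambda>\<omega>. t * Z \<omega> + K * (Z \<omega>)^2) \<le> E (\<lambda>\<omega>. t * Z \<omega>) + E (\<lambda>\<omega>. K * (Z \<omega>)^2)"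
    using E1 by (intro E_add_le Z1 Z2) simp
  also have "E (\<lambda>\<omega>. K * (Z \<omega>)^2) = ereal K * E (\<lambda>\<omega>. (Z \<omega>)^2)"
    by (rule E_cmult[OF H_power2[OF Z] K])
  also have "\<dots> \<le> ereal (K * D)" using K D by (metis ereal_mult_left_mono less_imp_le times_ereal.simps(1) ereal_less_eq(5))
  finally show ?thesis using E1 by (simp add: K_def add_left_mono)
qed

lemma E_indep_mult:
  assumes ind: "indep_of E Zs W" and lip: "loc_lip (Suc (length Zs)) \<psi>"
    and split: "\<And>x y. length x = length Zs \<Longrightarrow> \<psi> (x @ [y]) = \<phi> x * g y"
    and \<phi>: "\<And>x. 0 \<le> \<phi> x" and gW: "(\<lambda>\<omega>. g (W \<omega>)) \<in> H" and c: "E (\<lambda>\<omega>. g (W \<omega>)) = ereal c"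
  shows "E (\<lambda>\<omega>. \<psi> (map (\<lambda>X. X \<omega>) Zs @ [W \<omega>])) = E (\<lambda>\<omega>. c * \<phi> (map (\<lambda>X. X \<omega>) Zs))"
proof -
  have inner: "E (\<lambda>\<omega>. \<psi> (x @ [W \<omega>])) = ereal (c * \<phi> x)" if "length x = length Zs" for x
  proof -
    have "E (\<lambda>\<omega>. \<psi> (x @ [W \<omega>])) = E (\<lambda>\<omega>. \<phi> x * g (W \<omega>))" using that by (simp add: split)
    also have "\<dots> = ereal (c * \<phi> x)" using E_cmult_nonneg[OF gW \<phi>] c by (simp add: mult.commute)
    finally show ?thesis .
  qed
  then show ?thesis using ind lip unfolding indep_of_def by auto
qed

end

locale sublinear_variable = sublinear_expectation +
  fixes X :: "'a \<Rightarrow> real"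
  assumes X_in_H: "X \<in> H"
begin

lemma X_measurable [measurable]: "X \<in> borel_measurable M"
  using H_measurable[OF X_in_H] .

definition bump_mean :: "real \<Rightarrow> real" where
  "bump_mean r = real_of_ereal (E (\<lambda>\<omega>. bump r (X \<omega>)))"

lemma H_bump: "Z \<in> H \<Longrightarrow> (\<lambda>\<omega>. bump r (Z \<omega>)) \<in> H"
  using H_lipschitz[OF _ bump_lipschitz] .

lemma E_bump_eq_bump_mean: "E (\<lambda>\<omega>. bump r (X \<omega>)) = ereal (bump_mean r)"
  and bump_mean_nonneg: "0 \<le> bump_mean r"
proof -
  obtain e where "E (\<lambda>\<omega>. bump r (X \<omega>)) = ereal e" "0 \<le> e"
    using E_bounded_real[OF H_bump[OF X_in_H]] bump_bounds by metis
  then show "E (\<lambda>\<omega>. bump r (X \<omega>)) = ereal (bump_mean r)" "0 \<le> bump_mean r"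
    by (simp_all add: bump_mean_def)
qed

lemma bump_mean_le_capacity: "ennreal (bump_mean r) \<le> capacity \<P> {\<omega>\<in>space M. \<bar>X \<omega>\<bar> > r - 1}"
  by (intro E_le_capacity_real[OF H_bump[OF X_in_H] _ E_bump_eq_bump_mean]) (auto simp: bump_bounds bump_pos_imp)

end

section \<open>Independent identically distributed sequences\<close>

locale iid_sequence = sublinear_variable +
  fixes Xs :: "nat \<Rightarrow> 'a \<Rightarrow> real"
  assumes Xs_in_H: "\<And>n. n \<ge> 1 \<Longrightarrow> Xs n \<in> H"
    and ident: "\<And>n. n \<ge> 1 \<Longrightarrow> ident_distr E (Xs n) X"
    and indep: "\<And>n. n \<ge> 1 \<Longrightarrow> indep_of E (map Xs [1..<Suc n]) (Xs (Suc n))"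
begin

lemma Xs_measurable: "k \<ge> 1 \<Longrightarrow> Xs k \<in> borel_measurable M"
  using H_measurable[OF Xs_in_H] .

lemma clipped_sum_measurable: "(\<lambda>\<omega>. \<Sum>k=1..m. clip b (Xs k \<omega>)) \<in> borel_measurable M"
proof (rule borel_measurable_sum)
  fix k assume "k \<in> {1..m}"
  then have [measurable]: "Xs k \<in> borel_measurable M" by (intro Xs_measurable) simp
  show "(\<lambda>\<omega>. clip b (Xs k \<omega>)) \<in> borel_measurable M" unfolding clip_def by measurable
qed

lemma E_ident:
  assumes "k \<ge> 1" "\<bar>E (\<lambda>\<omega>. g (X \<omega>))\<bar> \<noteq> \<infinity>" "\<And>x y. \<bar>g x - g y\<bar> \<le> C * \<bar>x - y\<bar>"
  shows "E (\<lambda>\<omega>. g (Xs k \<omega>)) = E (\<lambda>\<omega>. g (X \<omega>))"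
  using ident[OF assms(1)] loc_lip_lipschitz[of g C, OF assms(3)] assms(2)
  unfolding ident_distr_def by auto

lemma Xs_gt_measurable: "k \<ge> 1 \<Longrightarrow> {\<omega>\<in>space M. \<bar>Xs k \<omega>\<bar> > r} \<in> sets M"
proof -
  assume "k \<ge> 1"
  then have [measurable]: "Xs k \<in> borel_measurable M" by (rule Xs_measurable)
  show ?thesis by measurable
qed

lemma capacity_Xs_gt_le_bump_mean:
  assumes k: "k \<ge> 1"
  shows "capacity \<P> {\<omega>\<in>space M. \<bar>Xs k \<omega>\<bar> > r} \<le> ennreal (bump_mean r)"
proof -
  have "E (\<lambda>\<omega>. bump r (Xs k \<omega>)) = ereal (bump_mean r)"
    using E_ident[OF k _ bump_lipschitz] E_bump_eq_bump_mean by simp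
  then show ?thesis
    using k by (intro capacity_le_E[OF H_bump[of _ r, OF Xs_in_H]] Xs_gt_measurable)
      (auto simp: bump_bounds bump_eq_1)
qed

lemma capacity_Xs_gt_le:
  "k \<ge> 1 \<Longrightarrow> capacity \<P> {\<omega>\<in>space M. \<bar>Xs k \<omega>\<bar> > r} \<le> capacity \<P> {\<omega>\<in>space M. \<bar>X \<omega>\<bar> > r - 1}"
  using capacity_Xs_gt_le_bump_mean bump_mean_le_capacity by (rule order_trans)

context
  fixes h :: "nat \<Rightarrow> real \<Rightarrow> real" and B L :: real
  assumes h_bounded: "\<And>k x. 0 \<le> h k x \<and> h k x \<le> B"
    and h_lipschitz: "\<And>k x y. \<bar>h k x - h k y\<bar> \<le> L * \<bar>x - y\<bar>"
begin

private definition \<psi> :: "real list \<Rightarrow> real" where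
  "\<psi> l = (\<Prod>i<length l. h (Suc i) (l!i))"

private lemma \<psi>_snoc: "\<psi> (x @ [y]) = \<psi> x * h (Suc (length x)) y"
proof -
  have "\<psi> (x @ [y]) = (\<Prod>i<length x. h (Suc i) ((x @ [y])!i)) * h (Suc (length x)) y"
    unfolding \<psi>_def by (simp add: nth_append)
  also have "(\<Prod>i<length x. h (Suc i) ((x @ [y])!i)) = \<psi> x"
    unfolding \<psi>_def by (intro prod.cong) (auto simp: nth_append)
  finally show ?thesis .
qed

private lemma loc_lip_\<psi>: "loc_lip N \<psi>"
  unfolding \<psi>_def by (rule loc_lip_prod[of h, OF h_bounded h_lipschitz])

private lemma \<psi>_Xs: "\<psi> (map (\<lambda>X. X \<omega>) (map Xs [1..<Suc n])) = (\<Prod>i<n. h (Suc i) (Xs (Suc i) \<omega>))"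
  unfolding \<psi>_def by (intro prod.cong) (auto simp del: upt_Suc)

lemma H_prod: "(\<lambda>\<omega>. \<Prod>i<n. h (Suc i) (Xs (Suc i) \<omega>)) \<in> H"
proof -
  have "(\<lambda>\<omega>. \<psi> (map (\<lambda>X. X \<omega>) (map Xs [1..<Suc n]))) \<in> H"
    using Xs_in_H by (intro H_comp loc_lip_\<psi>) auto
  then show ?thesis by (simp only: \<psi>_Xs)
qed

lemma E_prod_indep:
  "E (\<lambda>\<omega>. \<Prod>i<n. h (Suc i) (Xs (Suc i) \<omega>)) = ereal (\<Prod>i<n. real_of_ereal (E (\<lambda>\<omega>. h (Suc i) (X \<omega>))))"
proof (induction n)
  case 0
  then show ?case by simp
next
  case (Suc n)
  have hX: "(\<lambda>\<omega>. h (Suc n) (X \<omega>)) \<in> H" using H_lipschitz[OF X_in_H h_lipschitz] .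
  obtain e where eX: "E (\<lambda>\<omega>. h (Suc n) (X \<omega>)) = ereal e" and e0: "0 \<le> e"
    using E_bounded_real[OF hX] h_bounded by metis
  have eXs: "E (\<lambda>\<omega>. h (Suc n) (Xs (Suc n) \<omega>)) = ereal e"
    using E_ident[of "Suc n" "h (Suc n)" L] eX h_lipschitz by simp
  have "E (\<lambda>\<omega>. \<Prod>i<Suc n. h (Suc i) (Xs (Suc i) \<omega>)) = ereal (e * (\<Prod>i<n. real_of_ereal (E (\<lambda>\<omega>. h (Suc i) (X \<omega>)))))"
  proof (cases "n = 0")
    case True
    then show ?thesis using eXs by simp
  next
    case False
    define Zs where "Zs = map Xs [1..<Suc n]"
    have \<psi>_Zs: "\<psi> (map (\<lambda>X. X \<omega>) Zs) = (\<Prod>i<n. h (Suc i) (Xs (Suc i) \<omega>))" for \<omega>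
      unfolding Zs_def by (rule \<psi>_Xs)
    have len_Zs: "length Zs = n" unfolding Zs_def by simp
    have "E (\<lambda>\<omega>. \<Prod>i<Suc n. h (Suc i) (Xs (Suc i) \<omega>)) = E (\<lambda>\<omega>. \<psi> (map (\<lambda>X. X \<omega>) Zs @ [Xs (Suc n) \<omega>]))"
      by (simp add: \<psi>_snoc \<psi>_Zs len_Zs)
    also have "\<dots> = E (\<lambda>\<omega>. e * \<psi> (map (\<lambda>X. X \<omega>) Zs))"
    proof (rule E_indep_mult)
      show "indep_of E Zs (Xs (Suc n))" unfolding Zs_def using indep False by simp
      show "loc_lip (Suc (length Zs)) \<psi>" by (rule loc_lip_\<psi>)
      show "\<psi> (x @ [y]) = \<psi> x * h (Suc n) y" if "length x = length Zs" for x y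
        using that by (simp add: \<psi>_snoc len_Zs)
      show "0 \<le> \<psi> x" for x unfolding \<psi>_def using h_bounded by (simp add: prod_nonneg)
      show "(\<lambda>\<omega>. h (Suc n) (Xs (Suc n) \<omega>)) \<in> H" using H_lipschitz[OF Xs_in_H h_lipschitz] by simp
    qed (fact eXs)
    also have "\<dots> = ereal e * E (\<lambda>\<omega>. \<Prod>i<n. h (Suc i) (Xs (Suc i) \<omega>))"
      unfolding \<psi>_Zs by (rule E_cmult_nonneg[OF H_prod e0])
    finally show ?thesis using Suc.IH by simp
  qed
  then show ?case using eX by (simp add: mult.commute)
qed

end

lemma capacity_pair_gt_le:
  assumes ij: "1 \<le> i" "i < j"
  shows "capacity \<P> {\<omega>\<in>space M. \<bar>Xs i \<omega>\<bar> > b \<and> \<bar>Xs j \<omega>\<bar> > b} \<le> ennreal ((bump_mean b)^2)"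
proof -
  define h where "h k = (if k = i \<or> k = j then bump b else (\<lambda>_. 1::real))" for k
  have hb: "0 \<le> h k x \<and> h k x \<le> 1" for k x unfolding h_def by (auto simp: bump_bounds)
  have hl: "\<bar>h k x - h k y\<bar> \<le> 1 * \<bar>x - y\<bar>" for k x y unfolding h_def using bump_lipschitz by auto
  define Z where "Z \<omega> = (\<Prod>k<j. h (Suc k) (Xs (Suc k) \<omega>))" for \<omega>
  have "(\<Prod>k<j. real_of_ereal (E (\<lambda>\<omega>. h (Suc k) (X \<omega>))))
      = (\<Prod>k<j. if Suc k = i \<or> Suc k = j then bump_mean b else 1)"
    unfolding h_def bump_mean_def by (intro prod.cong) auto
  also have "\<dots> = (bump_mean b)^2"
  proof -
    have "{..<j} \<inter> {k. Suc k = i \<or> Suc k = j} = {i - 1, j - 1}" using ij by auto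
    moreover have "card {i - 1, j - 1} = 2" using ij by auto
    ultimately show ?thesis by (simp add: prod.If_cases)
  qed
  finally have EZ: "E Z = ereal ((bump_mean b)^2)"
    using E_prod_indep[of h, OF hb hl] unfolding Z_def by simp
  have [measurable]: "Xs i \<in> borel_measurable M" "Xs j \<in> borel_measurable M"
    using ij by (simp_all add: Xs_measurable)
  show ?thesis
  proof (rule capacity_le_E)
    show "Z \<in> H" unfolding Z_def by (rule H_prod[of h, OF hb hl])
    show "0 \<le> Z \<omega>" for \<omega> unfolding Z_def using hb by (simp add: prod_nonneg)
    fix \<omega> assume "\<omega> \<in> {\<omega>\<in>space M. \<bar>Xs i \<omega>\<bar> > b \<and> \<bar>Xs j \<omega>\<bar> > b}"
    then have "Z \<omega> = (\<Prod>k<j. 1)" unfolding Z_def by (intro prod.cong) (auto simp: h_def bump_eq_1)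
    then show "1 \<le> Z \<omega>" by simp
  qed (use EZ in simp_all)
qed

lemma capacity_some_gt_le:
  "capacity \<P> (\<Union>k\<in>{1..m}. {\<omega>\<in>space M. \<bar>Xs k \<omega>\<bar> > r})
    \<le> ennreal (real m) * capacity \<P> {\<omega>\<in>space M. \<bar>X \<omega>\<bar> > r - 1}"
proof -
  have "capacity \<P> (\<Union>k\<in>{1..m}. {\<omega>\<in>space M. \<bar>Xs k \<omega>\<bar> > r})
      \<le> (\<Sum>k\<in>{1..m}. capacity \<P> {\<omega>\<in>space M. \<bar>Xs k \<omega>\<bar> > r})"
    by (intro capacity_UN_le Xs_gt_measurable) auto
  also have "\<dots> \<le> (\<Sum>k\<in>{1..m}. capacity \<P> {\<omega>\<in>space M. \<bar>X \<omega>\<bar> > r - 1})"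
    by (intro sum_mono capacity_Xs_gt_le) auto
  finally show ?thesis by (simp add: ennreal_of_nat_eq_real_of_nat)
qed

definition index_pairs :: "nat \<Rightarrow> (nat \<times> nat) set" where
  "index_pairs m = {(i, j). 1 \<le> i \<and> i < j \<and> j \<le> m}"

lemma finite_index_pairs: "finite (index_pairs m)"
  by (rule finite_subset[of _ "{1..m} \<times> {1..m}"]) (auto simp: index_pairs_def)

lemma pair_event_measurable:
  "p \<in> index_pairs m \<Longrightarrow> {\<omega>\<in>space M. \<bar>Xs (fst p) \<omega>\<bar> > b \<and> \<bar>Xs (snd p) \<omega>\<bar> > b} \<in> sets M"
  using Xs_gt_measurable[of "fst p" b] Xs_gt_measurable[of "snd p" b]
  by (auto simp: index_pairs_def Collect_conj_eq[symmetric])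

lemma card_index_pairs_le: "real (card (index_pairs m)) \<le> (real m)^2"
proof -
  have "card (index_pairs m) \<le> card ({1..m} \<times> {1..m})"
    by (rule card_mono) (auto simp: index_pairs_def)
  then show ?thesis by (simp add: power2_eq_square flip: of_nat_mult)
qed

lemma capacity_some_pair_gt_le:
  "capacity \<P> (\<Union>p\<in>index_pairs m. {\<omega>\<in>space M. \<bar>Xs (fst p) \<omega>\<bar> > b \<and> \<bar>Xs (snd p) \<omega>\<bar> > b})
    \<le> ennreal ((real m)^2 * (bump_mean b)^2)"
proof -
  have "capacity \<P> (\<Union>p\<in>index_pairs m. {\<omega>\<in>space M. \<bar>Xs (fst p) \<omega>\<bar> > b \<and> \<bar>Xs (snd p) \<omega>\<bar> > b})
      \<le> (\<Sum>p\<in>index_pairs m. capacity \<P> {\<omega>\<in>space M. \<bar>Xs (fst p) \<omega>\<bar> > b \<and> \<bar>Xs (snd p) \<omega>\<bar> > b})"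
    by (intro capacity_UN_le finite_index_pairs pair_event_measurable)
  also have "\<dots> \<le> (\<Sum>p\<in>index_pairs m. ennreal ((bump_mean b)^2))"
    by (intro sum_mono capacity_pair_gt_le) (auto simp: index_pairs_def)
  also have "\<dots> = ennreal (real (card (index_pairs m)) * (bump_mean b)^2)"
    by (simp add: ennreal_mult ennreal_of_nat_eq_real_of_nat)
  also have "\<dots> \<le> ennreal ((real m)^2 * (bump_mean b)^2)"
    using card_index_pairs_le by (intro ennreal_leI mult_right_mono) auto
  finally show ?thesis .
qed

lemma sum_gt_subset:
  assumes "b \<ge> 0" "\<eta> \<ge> 0"
  shows "{\<omega>\<in>space M. \<bar>\<Sum>k=1..m. Xs k \<omega>\<bar> > real m * (1 + 3 * \<eta>)}
    \<subseteq> (\<Union>k\<in>{1..m}. {\<omega>\<in>space M. \<bar>Xs k \<omega>\<bar> > real m * (1 + \<eta>)})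
      \<union> (\<Union>p\<in>index_pairs m. {\<omega>\<in>space M. \<bar>Xs (fst p) \<omega>\<bar> > b \<and> \<bar>Xs (snd p) \<omega>\<bar> > b})
      \<union> {\<omega>\<in>space M. \<bar>\<Sum>k=1..m. clip b (Xs k \<omega>)\<bar> > real m * \<eta>}"
    (is "_ \<subseteq> ?B1 \<union> ?B2 \<union> ?B3")
proof (intro subsetI)
  fix \<omega> assume A: "\<omega> \<in> {\<omega>\<in>space M. \<bar>\<Sum>k=1..m. Xs k \<omega>\<bar> > real m * (1 + 3 * \<eta>)}"
  show "\<omega> \<in> ?B1 \<union> ?B2 \<union> ?B3"
  proof (cases "\<omega> \<in> ?B1 \<union> ?B2")
    case False
    have "\<bar>\<Sum>k=1..m. Xs k \<omega>\<bar> \<le> \<bar>\<Sum>k=1..m. clip b (Xs k \<omega>)\<bar> + real m * (1 + \<eta>)"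
    proof (rule abs_sum_le_abs_sum_clip)
      show "\<bar>Xs k \<omega>\<bar> \<le> real m * (1 + \<eta>)" if "k \<in> {1..m}" for k
        using A False that by (auto simp: not_less)
      show "i = j" if "i \<in> {1..m}" "j \<in> {1..m}" "b < \<bar>Xs i \<omega>\<bar>" "b < \<bar>Xs j \<omega>\<bar>" for i j
      proof (rule ccontr)
        assume "i \<noteq> j"
        then have "(min i j, max i j) \<in> index_pairs m" using that by (auto simp: index_pairs_def)
        then show False using A False that by (auto simp: min_def max_def split: if_splits)
      qed
    qed (use assms in auto)
    then show ?thesis using A assms by (auto simp: algebra_simps)
  qed blast
qed

end

locale centered_iid_sequence = iid_sequence +
  assumes mean_zero: "E X = 0" and mean_neg_zero: "E (\<lambda>\<omega>. - X \<omega>) = 0"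
begin

lemma capacity_clipped_sum_gt_le:
  assumes D: "E (\<lambda>\<omega>. (X \<omega>)^2) \<le> ereal D" and s: "s \<in> {1, -1}" and t: "t > 0" and b: "b > 0"
  shows "capacity \<P> {\<omega>\<in>space M. s * (\<Sum>k=1..m. clip b (Xs k \<omega>)) > x}
           \<le> ennreal (exp (- (t * x)) * (1 + (t / b + t^2 * exp (t * b)) * D)^m)"
proof -
  define q where "q = 1 + (t / b + t^2 * exp (t * b)) * D"
  define h where "h k y = exp (t * clip b (s * y))" for k :: nat and y
  have hb: "0 \<le> h k y \<and> h k y \<le> exp (t * b)" for k y
    unfolding h_def using exp_clip_bounds t b by simp
  have hl: "\<bar>h k x - h k y\<bar> \<le> (exp (t * b) * t) * \<bar>x - y\<bar>" for k x y
    using exp_clip_lipschitz[of t b "s * x" "s * y"] t b s by (auto simp: h_def abs_minus_commute)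
  have sX: "(\<lambda>\<omega>. s * X \<omega>) \<in> H" "E (\<lambda>\<omega>. s * X \<omega>) = 0" "E (\<lambda>\<omega>. (s * X \<omega>)^2) \<le> ereal D"
    using s mean_zero mean_neg_zero D H_cmult[OF X_in_H] by auto
  have hX: "0 \<le> real_of_ereal (E (\<lambda>\<omega>. h k (X \<omega>))) \<and> real_of_ereal (E (\<lambda>\<omega>. h k (X \<omega>))) \<le> q" for k
  proof -
    obtain e where "E (\<lambda>\<omega>. h k (X \<omega>)) = ereal e" "0 \<le> e"
      using E_bounded_real[OF H_lipschitz[OF X_in_H hl]] hb by metis
    moreover have "E (\<lambda>\<omega>. h k (X \<omega>)) \<le> ereal q"
      using E_exp_clip_le[OF sX t b] unfolding h_def q_def .
    ultimately show ?thesis by simp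
  qed
  define Z where "Z \<omega> = exp (- (t * x)) * (\<Prod>i<m. h (Suc i) (Xs (Suc i) \<omega>))" for \<omega>
  have "(\<Prod>i<m. real_of_ereal (E (\<lambda>\<omega>. h (Suc i) (X \<omega>)))) \<le> q^m"
    using prod_mono[of "{..<m}" "\<lambda>i. real_of_ereal (E (\<lambda>\<omega>. h (Suc i) (X \<omega>)))" "\<lambda>_. q"] hX by simp
  then have EZ: "E Z \<le> ereal (exp (- (t * x)) * q^m)"
    unfolding Z_def E_cmult[OF H_prod[of h, OF hb hl] exp_gt_zero] E_prod_indep[of h, OF hb hl]
    by (simp add: mult_left_mono)
  have clip_sum: "(\<Prod>i<m. h (Suc i) (Xs (Suc i) \<omega>)) = exp (t * (s * (\<Sum>k=1..m. clip b (Xs k \<omega>))))" for \<omega>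
    using clip_sign[of b s] b s
    by (simp add: h_def exp_sum[symmetric] sum_distrib_left sum.atLeast1_atMost_eq mult.assoc)
  show ?thesis unfolding q_def[symmetric]
  proof (rule capacity_le_E[OF _ _ _ _ EZ])
    show "Z \<in> H" unfolding Z_def by (rule H_cmult[OF H_prod[of h, OF hb hl]])
    show "0 \<le> Z \<omega>" for \<omega> unfolding Z_def using hb by (simp add: prod_nonneg)
    show "{\<omega>\<in>space M. s * (\<Sum>k=1..m. clip b (Xs k \<omega>)) > x} \<in> sets M"
      using clipped_sum_measurable by measurable
    fix \<omega> assume "\<omega> \<in> {\<omega>\<in>space M. s * (\<Sum>k=1..m. clip b (Xs k \<omega>)) > x}"
    then have "exp (t * x) \<le> exp (t * (s * (\<Sum>k=1..m. clip b (Xs k \<omega>))))" using t by simp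
    then show "1 \<le> Z \<omega>" unfolding Z_def clip_sum by (simp add: exp_minus field_simps)
  qed
qed

lemma capacity_abs_clipped_sum_gt_le:
  assumes D: "D \<ge> 0" "E (\<lambda>\<omega>. (X \<omega>)^2) \<le> ereal D" and b: "b \<ge> 1" and m: "real m \<le> b^2"
  shows "capacity \<P> {\<omega>\<in>space M. \<bar>\<Sum>k=1..m. clip b (Xs k \<omega>)\<bar> > x}
           \<le> 2 * ennreal (exp ((1 + exp 1) * D - x / b))"
proof -
  let ?B = "\<lambda>s. {\<omega>\<in>space M. s * (\<Sum>k=1..m. clip b (Xs k \<omega>)) > x}"
  have B_meas: "?B s \<in> sets M" for s using clipped_sum_measurable by measurable
  have B_le: "capacity \<P> (?B s) \<le> ennreal (exp ((1 + exp 1) * D - x / b))" if "s \<in> {1, -1}" for s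
  proof -
    have "1 / b > 0" "b > 0" using b by simp_all
    from capacity_clipped_sum_gt_le[OF D(2) that this, where m=m and x=x]
    show ?thesis using ennreal_leI[OF chernoff_factor_le[OF b m D(1), of x]] by (rule order_trans)
  qed
  have "{\<omega>\<in>space M. \<bar>\<Sum>k=1..m. clip b (Xs k \<omega>)\<bar> > x} = ?B 1 \<union> ?B (-1)" by auto
  then have "capacity \<P> {\<omega>\<in>space M. \<bar>\<Sum>k=1..m. clip b (Xs k \<omega>)\<bar> > x} \<le> capacity \<P> (?B 1) + capacity \<P> (?B (-1))"
    using capacity_Un_le[OF B_meas[of 1] B_meas[of "-1"]] by (simp only:)
  also have "\<dots> \<le> 2 * ennreal (exp ((1 + exp 1) * D - x / b))"
    using add_mono[OF B_le[of 1] B_le[of "-1"]] by (simp add: mult_2)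
  finally show ?thesis .
qed

end

section \<open>The Choquet moment condition\<close>

locale choquet_moment = sublinear_variable +
  fixes \<alpha> :: real
  assumes alpha: "\<alpha> > 1"
    and choquet_finite: "choquet M \<P> (\<lambda>\<omega>. exp_lnp_powr \<alpha> \<bar>X \<omega>\<bar>) < \<infinity>"
begin

abbreviation f :: "real \<Rightarrow> real" where
  "f \<equiv> exp_lnp_powr \<alpha>"

definition tail :: "real \<Rightarrow> ennreal" where
  "tail y = capacity \<P> {\<omega>\<in>space M. f \<bar>X \<omega>\<bar> > y}"

definition tail_integral :: ennreal where
  "tail_integral = (\<integral>\<^sup>+ y\<in>{0..}. tail y \<partial>lborel)"

lemma tail_event_measurable [measurable]: "{\<omega>\<in>space M. f \<bar>X \<omega>\<bar> > y} \<in> sets M"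
  unfolding exp_lnp_powr_def lnp_def by measurable

lemma tail_antimono: "x \<le> y \<Longrightarrow> tail y \<le> tail x"
  unfolding tail_def by (rule capacity_mono) auto

lemma tail_le_1: "tail y \<le> 1"
  unfolding tail_def by (rule capacity_le_1)

lemma tail_neg: "y < 0 \<Longrightarrow> tail y = 1"
proof -
  assume "y < 0"
  then have "{\<omega>\<in>space M. f \<bar>X \<omega>\<bar> > y} = space M"
    by (auto intro!: less_le_trans[OF _ exp_lnp_powr_ge_1])
  then show ?thesis unfolding tail_def using capacity_space by simp
qed

lemma tail_integral_finite: "tail_integral < \<infinity>"
proof -
  have "(\<lambda>y. (1 - tail y) * indicator {..<0} y) = (\<lambda>y. 0)"
    by (auto simp: fun_eq_iff tail_neg indicator_def)
  then have "choquet M \<P> (\<lambda>\<omega>. f \<bar>X \<omega>\<bar>) = enn2ereal tail_integral"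
    unfolding choquet_def tail_integral_def tail_def by (simp add: zero_ennreal.rep_eq)
  then show ?thesis using choquet_finite by (simp add: less_top[symmetric])
qed

lemma tail_integral_real: "tail_integral = ennreal (enn2real tail_integral)"
  using tail_integral_finite by (simp add: ennreal_enn2real_if)

lemma tail_markov: "s > 0 \<Longrightarrow> ennreal s * tail s \<le> tail_integral"
proof -
  assume s: "s > 0"
  have "ennreal s * tail s = (\<integral>\<^sup>+ y. tail s * indicator {0..<s} y \<partial>lborel)"
    using s by (subst nn_integral_cmult_indicator) (auto simp: mult.commute)
  also have "\<dots> \<le> tail_integral" unfolding tail_integral_def
    by (intro nn_integral_mono) (auto simp: indicator_def tail_antimono)
  finally show ?thesis .
qed

lemma tail_interval_sum:
  assumes a: "mono a" "a 0 \<ge> 0"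
  shows "(\<Sum>n. ennreal (a (Suc n) - a n) * tail (a (Suc n))) \<le> tail_integral"
proof -
  have disj: "x \<notin> {a n..<a (Suc n)}" if "x \<in> {a n0..<a (Suc n0)}" "n \<noteq> n0" for x n n0
    using that monoD[OF a(1), of "Suc n" n0] monoD[OF a(1), of "Suc n0" n]
    by (cases "n < n0") auto
  have "(\<integral>\<^sup>+ y. tail (a (Suc n)) * indicator {a n..<a (Suc n)} y \<partial>lborel)
      = tail (a (Suc n)) * ennreal (a (Suc n) - a n)" for n
    using monoD[OF a(1), of n "Suc n"] by (subst nn_integral_cmult_indicator) auto
  then have "(\<Sum>n. ennreal (a (Suc n) - a n) * tail (a (Suc n)))
      = (\<Sum>n. \<integral>\<^sup>+ y. tail (a (Suc n)) * indicator {a n..<a (Suc n)} y \<partial>lborel)"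
    by (simp add: mult.commute)
  also have "\<dots> = (\<integral>\<^sup>+ y. (\<Sum>n. tail (a (Suc n)) * indicator {a n..<a (Suc n)} y) \<partial>lborel)"
    by (rule nn_integral_suminf[symmetric]) auto
  also have "\<dots> \<le> tail_integral" unfolding tail_integral_def
  proof (intro nn_integral_mono)
    fix y :: real
    show "(\<Sum>n. tail (a (Suc n)) * indicator {a n..<a (Suc n)} y) \<le> tail y * indicator {0..} y"
    proof (cases "\<exists>n. y \<in> {a n..<a (Suc n)}")
      case False
      then have "(\<Sum>n. tail (a (Suc n)) * indicator {a n..<a (Suc n)} y) = (\<Sum>n. 0)"
        by (intro suminf_cong) (auto simp: indicator_def)
      then show ?thesis by simp
    next
      case True
      then obtain n0 where n0: "y \<in> {a n0..<a (Suc n0)}" by blast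
      have "(\<Sum>n. tail (a (Suc n)) * indicator {a n..<a (Suc n)} y)
          = (\<Sum>n\<in>{n0}. tail (a (Suc n)) * indicator {a n..<a (Suc n)} y)"
        using disj[OF n0] by (intro suminf_finite) (auto simp: indicator_def)
      also have "\<dots> \<le> tail y" using n0 by (simp add: tail_antimono)
      also have "\<dots> = tail y * indicator {0..} y"
        using n0 a monoD[OF a(1), of 0 n0] by (simp add: indicator_def)
      finally show ?thesis .
    qed
  qed
  finally show ?thesis .
qed

lemma tail_shift_sum: "(\<Sum>t. tail (real t - real K)) \<le> ennreal (real K + 1) + tail_integral"
proof -
  define a where "a n = max 0 (real n - real K - 1)" for n
  have a_mono: "mono a" unfolding a_def mono_def by auto
  have A: "ennreal (a (Suc t) - a t) * tail (a (Suc t)) = (if K + 1 \<le> t then tail (real t - real K) else 0)" for t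
    unfolding a_def by (auto simp: max_def)
  define B where "B t = (if t \<le> K then (1::ennreal) else 0)" for t
  have "(\<Sum>t. tail (real t - real K)) \<le> (\<Sum>t. (if K + 1 \<le> t then tail (real t - real K) else 0) + B t)"
    by (intro suminf_le allI) (auto simp: B_def tail_le_1)
  also have "\<dots> = (\<Sum>t. (if K + 1 \<le> t then tail (real t - real K) else 0)) + (\<Sum>t. B t)"
    by (rule suminf_add[symmetric]) auto
  also have "(\<Sum>t. (if K + 1 \<le> t then tail (real t - real K) else 0)) \<le> tail_integral"
    using tail_interval_sum[OF a_mono] unfolding A by (simp add: a_def)
  also have "(\<Sum>t. B t) = (\<Sum>t\<in>{..K}. B t)" by (rule suminf_finite) (auto simp: B_def)
  also have "\<dots> = ennreal (real K + 1)" by (simp add: B_def ennreal_of_nat_eq_real_of_nat)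
  finally show ?thesis by (simp add: add.commute)
qed

lemma nn_integral_square_le:
  assumes P: "P \<in> \<P>" and K: "\<And>x. x^2 \<le> real K + f \<bar>x\<bar>"
  shows "(\<integral>\<^sup>+ \<omega>. ennreal ((X \<omega>)^2) \<partial>P) \<le> ennreal (real K + 1) + tail_integral"
proof -
  define g where "g \<omega> = enat (nat \<lceil>(X \<omega>)^2\<rceil>)" for \<omega>
  have "g \<in> measurable M (count_space UNIV)" unfolding g_def by measurable
  then have g_meas: "g \<in> measurable P (count_space UNIV)"
    using sets_P[OF P] by (simp add: measurable_def space_P[OF P])
  have "(\<integral>\<^sup>+ \<omega>. ennreal ((X \<omega>)^2) \<partial>P) \<le> (\<integral>\<^sup>+ \<omega>. ennreal_of_enat (g \<omega>) \<partial>P)"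
    unfolding g_def
    by (intro nn_integral_mono) (simp add: ennreal_of_nat_eq_real_of_nat ennreal_leI real_nat_ceiling_ge)
  also have "\<dots> = (\<Sum>t. emeasure P {\<omega> \<in> space P. enat t < g \<omega>})"
    by (rule nn_integral_enat_function[OF g_meas])
  also have "\<dots> \<le> (\<Sum>t. tail (real t - real K))"
  proof (intro suminf_le allI)
    fix t
    have "{\<omega> \<in> space P. enat t < g \<omega>} \<subseteq> {\<omega>\<in>space M. f \<bar>X \<omega>\<bar> > real t - real K}"
    proof
      fix \<omega> assume "\<omega> \<in> {\<omega> \<in> space P. enat t < g \<omega>}"
      then have w: "\<omega> \<in> space M" "t < nat \<lceil>(X \<omega>)^2\<rceil>" using space_P[OF P] by (auto simp: g_def)
      then have "real t < (X \<omega>)^2" by linarith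
      then show "\<omega> \<in> {\<omega>\<in>space M. f \<bar>X \<omega>\<bar> > real t - real K}" using w K[of "X \<omega>"] by auto
    qed
    then have "emeasure P {\<omega> \<in> space P. enat t < g \<omega>} \<le> emeasure P {\<omega>\<in>space M. f \<bar>X \<omega>\<bar> > real t - real K}"
      using P by (intro emeasure_mono) (auto simp: sets_P)
    also have "\<dots> \<le> tail (real t - real K)" unfolding tail_def capacity_def using P by (rule SUP_upper)
    finally show "emeasure P {\<omega> \<in> space P. enat t < g \<omega>} \<le> tail (real t - real K)" .
  qed auto
  also have "\<dots> \<le> ennreal (real K + 1) + tail_integral" by (rule tail_shift_sum)
  finally show ?thesis .
qed

lemma E_square_bounded: obtains D where "D \<ge> 0" "E (\<lambda>\<omega>. (X \<omega>)^2) \<le> ereal D"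
proof -
  obtain K :: nat where K: "\<And>x. x^2 \<le> real K + f \<bar>x\<bar>"
    using power2_le_exp_lnp_powr[OF alpha] by blast
  define D where "D = real K + 1 + enn2real tail_integral"
  have D: "D \<ge> 0" unfolding D_def by simp
  have "E (\<lambda>\<omega>. (X \<omega>)^2) \<le> ereal D"
    unfolding E_eq_SUP[OF H_power2[OF X_in_H]]
  proof (rule SUP_least)
    fix P assume P: "P \<in> \<P>"
    have "ext_expect P (\<lambda>\<omega>. (X \<omega>)^2) = enn2ereal (\<integral>\<^sup>+ \<omega>. ennreal ((X \<omega>)^2) \<partial>P)"
      using ext_expect_nonneg[OF P] by simp
    also have "\<dots> \<le> enn2ereal (ennreal (real K + 1) + tail_integral)"
      using nn_integral_square_le[OF P K] by (simp add: less_eq_ennreal.rep_eq)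
    also have "ennreal (real K + 1) + tail_integral = ennreal D"
      unfolding D_def by (subst tail_integral_real) (simp add: ennreal_plus[symmetric] del: ennreal_plus)
    finally show "ext_expect P (\<lambda>\<omega>. (X \<omega>)^2) \<le> ereal D" using D by simp
  qed
  then show ?thesis using that D by blast
qed

lemma capacity_abs_gt_le_tail:
  assumes "1 \<le> r" "r \<le> s"
  shows "capacity \<P> {\<omega>\<in>space M. \<bar>X \<omega>\<bar> > s} \<le> tail (f r)"
  unfolding tail_def using assms alpha
  by (intro capacity_mono) (auto intro: exp_lnp_powr_strict_mono)

lemma bump_mean_le:
  assumes b: "b \<ge> 2"
  shows "f (b - 1) * bump_mean b \<le> enn2real tail_integral"
proof -
  have "ennreal (f (b - 1) * bump_mean b) = ennreal (f (b - 1)) * ennreal (bump_mean b)"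
    using exp_lnp_powr_pos[of \<alpha> "b - 1"] bump_mean_nonneg[of b] by (simp add: ennreal_mult)
  also have "\<dots> \<le> ennreal (f (b - 1)) * tail (f (b - 1))"
    using order_trans[OF bump_mean_le_capacity capacity_abs_gt_le_tail] b
    by (intro mult_left_mono) auto
  also have "\<dots> \<le> tail_integral" by (rule tail_markov[OF exp_lnp_powr_pos])
  also have "\<dots> = ennreal (enn2real tail_integral)" by (rule tail_integral_real)
  finally show ?thesis by (simp add: ennreal_le_iff)
qed

lemma weighted_bump_mean_le:
  assumes b: "b \<ge> 2" and m: "m > 0" and square: "m^4 * weight \<alpha> m \<le> (f (b - 1))^2"
  shows "weight \<alpha> m * (m^2 * (bump_mean b)^2) \<le> (enn2real tail_integral)^2 / m^2"
proof -
  have "(f (b - 1) * bump_mean b)^2 \<le> (enn2real tail_integral)^2"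
    using bump_mean_le[OF b] exp_lnp_powr_pos[of \<alpha> "b - 1"] bump_mean_nonneg[of b]
    by (intro power_mono) auto
  then have "m^4 * weight \<alpha> m * (bump_mean b)^2 \<le> (enn2real tail_integral)^2"
    using square by (smt (verit, best) mult_right_mono power_mult_distrib zero_le_power2)
  then show ?thesis using m by (simp add: field_simps power4_eq_xxxx power2_eq_square)
qed

end

section \<open>Complete convergence\<close>

locale centered_iid_choquet =
  centered_iid_sequence M H E \<P> X Xs + choquet_moment M H E \<P> X \<alpha>
  for M H E \<P> X Xs \<alpha>
begin

lemma capacity_sum_gt_le:
  assumes \<eta>: "\<eta> > 0" "real m * \<eta> \<ge> 1" and b: "b \<ge> 1" "real m \<le> b^2"
    and D: "D \<ge> 0" "E (\<lambda>\<omega>. (X \<omega>)^2) \<le> ereal D"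
  shows "capacity \<P> {\<omega>\<in>space M. \<bar>\<Sum>k=1..m. Xs k \<omega>\<bar> > real m * (1 + 3 * \<eta>)}
     \<le> ennreal (real m) * tail (f m) + ennreal ((real m)^2 * (bump_mean b)^2)
       + 2 * ennreal (exp ((1 + exp 1) * D - real m * \<eta> / b))"
proof -
  define B1 where "B1 = (\<Union>k\<in>{1..m}. {\<omega>\<in>space M. \<bar>Xs k \<omega>\<bar> > real m * (1 + \<eta>)})"
  define B2 where "B2 = (\<Union>p\<in>index_pairs m. {\<omega>\<in>space M. \<bar>Xs (fst p) \<omega>\<bar> > b \<and> \<bar>Xs (snd p) \<omega>\<bar> > b})"
  define B3 where "B3 = {\<omega>\<in>space M. \<bar>\<Sum>k=1..m. clip b (Xs k \<omega>)\<bar> > real m * \<eta>}"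
  have meas: "B1 \<in> sets M" "B2 \<in> sets M" "B3 \<in> sets M"
    unfolding B1_def B2_def B3_def using clipped_sum_measurable[where m=m and b=b]
    by (auto intro!: Xs_gt_measurable pair_event_measurable finite_index_pairs)
  have m: "real m \<ge> 1" using \<eta> by (cases m) auto
  have "{\<omega>\<in>space M. \<bar>\<Sum>k=1..m. Xs k \<omega>\<bar> > real m * (1 + 3 * \<eta>)} \<subseteq> B1 \<union> B2 \<union> B3"
    unfolding B1_def B2_def B3_def using b \<eta> by (intro sum_gt_subset) auto
  then have "capacity \<P> {\<omega>\<in>space M. \<bar>\<Sum>k=1..m. Xs k \<omega>\<bar> > real m * (1 + 3 * \<eta>)}
      \<le> capacity \<P> B1 + capacity \<P> B2 + capacity \<P> B3"
    using meas capacity_Un_le[of "B1 \<union> B2" B3] capacity_Un_le[of B1 B2]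
    by (meson add_right_mono capacity_mono order_trans sets.Un)
  also have "capacity \<P> B1 \<le> ennreal (real m) * tail (f m)"
  proof -
    have "capacity \<P> {\<omega>\<in>space M. \<bar>X \<omega>\<bar> > real m * (1 + \<eta>) - 1} \<le> tail (f m)"
      using \<eta> m by (intro capacity_abs_gt_le_tail) (auto simp: algebra_simps)
    then show ?thesis unfolding B1_def
      by (intro order_trans[OF capacity_some_gt_le] mult_left_mono) auto
  qed
  also have "capacity \<P> B2 \<le> ennreal ((real m)^2 * (bump_mean b)^2)"
    unfolding B2_def by (rule capacity_some_pair_gt_le)
  also have "capacity \<P> B3 \<le> 2 * ennreal (exp ((1 + exp 1) * D - real m * \<eta> / b))"
    unfolding B3_def by (rule capacity_abs_clipped_sum_gt_le[OF D b])
  finally show ?thesis by (simp add: add_mono)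
qed

lemma weighted_capacity_sum_gt_le:
  assumes \<eta>: "\<eta> > 0" "real m * \<eta> \<ge> 1" and D: "D \<ge> 0" "E (\<lambda>\<omega>. (X \<omega>)^2) \<le> ereal D"
    and c: "1/2 \<le> c"
    and increment: "real m * weight \<alpha> m \<le> 2 / \<alpha> * (f m - f (real m - 1))"
    and square: "2 \<le> real m powr c" "real m ^ 4 * weight \<alpha> m \<le> (f (real m powr c - 1))^2"
    and exponential: "2 * (real m)^2 * weight \<alpha> m * exp ((1 + exp 1) * D - \<eta> * (real m / real m powr c)) \<le> 1"
  shows "ennreal (weight \<alpha> m) * capacity \<P> {\<omega>\<in>space M. \<bar>\<Sum>k=1..m. Xs k \<omega>\<bar> > real m * (1 + 3 * \<eta>)}
    \<le> ennreal (2 / \<alpha>) * (ennreal (f m - f (real m - 1)) * tail (f m))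
      + ennreal (((enn2real tail_integral)^2 + 1) / (real m)^2)"
proof -
  define w where "w = weight \<alpha> m"
  define b where "b = real m powr c"
  define e where "e = bump_mean b"
  define I where "I = enn2real tail_integral"
  define Q where "Q = exp ((1 + exp 1) * D - real m * \<eta> / b)"
  have w: "w \<ge> 0" unfolding w_def by (rule weight_nonneg)
  have m: "real m \<ge> 1" using \<eta> by (cases m) auto
  have b: "b \<ge> 2" using square(1) unfolding b_def .
  have mb: "real m \<le> b^2" unfolding b_def using le_powr_square[OF m c] .
  have first: "ennreal (w * real m) * tail (f m) \<le> ennreal (2 / \<alpha>) * (ennreal (f m - f (real m - 1)) * tail (f m))"
  proof -
    have "f (real m - 1) \<le> f m" using alpha m by (intro exp_lnp_powr_mono) auto
    then have "ennreal (2 / \<alpha> * (f m - f (real m - 1))) = ennreal (2 / \<alpha>) * ennreal (f m - f (real m - 1))"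
      using alpha by (intro ennreal_mult) auto
    moreover have "ennreal (w * real m) \<le> ennreal (2 / \<alpha> * (f m - f (real m - 1)))"
      using increment unfolding w_def by (intro ennreal_leI) (simp add: mult.commute)
    ultimately show ?thesis by (metis mult.assoc mult_right_mono zero_le)
  qed
  have second: "w * ((real m)^2 * e^2) \<le> I^2 / (real m)^2"
    using weighted_bump_mean_le[OF b _ square(2)[folded b_def]] m unfolding w_def e_def I_def by simp
  have third: "2 * (w * Q) \<le> 1 / (real m)^2"
    using exponential m unfolding w_def Q_def b_def by (simp add: field_simps)
  have "ennreal w * capacity \<P> {\<omega>\<in>space M. \<bar>\<Sum>k=1..m. Xs k \<omega>\<bar> > real m * (1 + 3 * \<eta>)}
      \<le> ennreal w * (ennreal (real m) * tail (f m) + ennreal ((real m)^2 * e^2) + 2 * ennreal Q)"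
    using capacity_sum_gt_le[OF \<eta> _ mb D] b unfolding e_def Q_def by (intro mult_left_mono) auto
  also have "\<dots> = ennreal (w * real m) * tail (f m) + ennreal (w * ((real m)^2 * e^2)) + ennreal (2 * (w * Q))"
    using w by (simp add: distrib_left ennreal_mult Q_def mult.assoc mult.left_commute)
  also have "\<dots> \<le> ennreal (2 / \<alpha>) * (ennreal (f m - f (real m - 1)) * tail (f m))
      + ennreal (I^2 / (real m)^2) + ennreal (1 / (real m)^2)"
    using first second third by (intro add_mono ennreal_leI) auto
  also have "\<dots> = ennreal (2 / \<alpha>) * (ennreal (f m - f (real m - 1)) * tail (f m)) + ennreal ((I^2 + 1) / (real m)^2)"
    by (simp add: add.assoc add_divide_distrib ennreal_plus[symmetric] del: ennreal_plus)
  finally show ?thesis unfolding w_def I_def .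
qed

lemma eventually_weighted_capacity_le:
  assumes \<eta>: "\<eta> > 0"
  shows "eventually (\<lambda>m. ennreal (weight \<alpha> m)
      * capacity \<P> {\<omega>\<in>space M. \<bar>\<Sum>k=1..m. Xs k \<omega>\<bar> > real m * (1 + 3 * \<eta>)}
    \<le> ennreal (2 / \<alpha>) * (ennreal (f m - f (real m - 1)) * tail (f m))
      + ennreal (((enn2real tail_integral)^2 + 1) / (real m)^2)) sequentially"
proof -
  obtain D where D: "D \<ge> 0" "E (\<lambda>\<omega>. (X \<omega>)^2) \<le> ereal D" by (rule E_square_bounded)
  define c where "c = (7/8::real) powr (1 / \<alpha>)"
  have c: "0 < c" "c < 1" "7/8 \<le> c" "c powr \<alpha> = 7/8"
    unfolding c_def using alpha powr_less_mono2[of "1 / \<alpha>" "7/8" 1] powr_mono'[of "1 / \<alpha>" 1 "7/8"]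
    by (auto simp: powr_powr)
  have "eventually (\<lambda>m. real m \<ge> 1 / \<eta>) sequentially"
    by (rule eventually_compose_filterlim[OF eventually_ge_at_top filterlim_real_sequentially])
  moreover note eventually_compose_filterlim[OF _ filterlim_real_sequentially,
      OF eventually_weight_le_increment[OF alpha]]
  moreover note eventually_compose_filterlim[OF _ filterlim_real_sequentially,
      OF eventually_weight_le_square[OF alpha c(1,4)]]
  moreover note eventually_compose_filterlim[OF _ filterlim_real_sequentially,
      OF eventually_weight_exp_le[OF alpha c(1,2) \<eta>, of "(1 + exp 1) * D"]]
  ultimately show ?thesis
  proof eventually_elim
    case (elim m)
    then show ?case
      using \<eta> c(3) by (intro weighted_capacity_sum_gt_le[OF \<eta> _ D]) (auto simp: field_simps)
  qed
qed

lemma weighted_capacity_sum_finite: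
  assumes \<epsilon>: "\<epsilon> > 1"
  shows "(\<Sum>n. ennreal (weight \<alpha> (Suc n))
           * capacity \<P> {\<omega>\<in>space M. \<bar>\<Sum>k=1..Suc n. Xs k \<omega>\<bar> > real (Suc n) * \<epsilon>}) < \<infinity>"
proof -
  define \<eta> where "\<eta> = (\<epsilon> - 1) / 3"
  have \<eta>: "\<eta> > 0" "\<epsilon> = 1 + 3 * \<eta>" using \<epsilon> unfolding \<eta>_def by (auto simp: field_simps)
  define I where "I = enn2real tail_integral"
  define G where "G n = ennreal (2 / \<alpha>) * (ennreal (f (Suc n) - f n) * tail (f (Suc n)))" for n
  have "(\<Sum>n. G n) \<le> ennreal (2 / \<alpha>) * tail_integral"
    using tail_interval_sum[of "\<lambda>n. f (real n)"] alpha exp_lnp_powr_pos[of \<alpha> 0]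
    unfolding G_def by (simp add: mono_def exp_lnp_powr_mono ennreal_suminf_cmult less_imp_le mult_left_mono)
  also have "\<dots> < \<infinity>" using tail_integral_finite by (simp add: ennreal_mult_less_top)
  finally have G_finite: "(\<Sum>n. G n) < \<infinity>" .
  have "summable (\<lambda>n. inverse (real n ^ 2))" by (rule inverse_power_summable) simp
  then have "summable (\<lambda>n. inverse (real (Suc n) ^ 2))" by (subst summable_Suc_iff)
  then have "summable (\<lambda>n. (I^2 + 1) * inverse (real (Suc n) ^ 2))" by (rule summable_mult)
  then have inverse_square_finite: "(\<Sum>n. ennreal ((I^2 + 1) / (real (Suc n))^2)) < \<infinity>"
    by (subst suminf_ennreal2) (auto simp: divide_inverse)
  show ?thesis
  proof (rule suminf_ennreal_finite_eventually_le)
    show "eventually (\<lambda>n. ennreal (weight \<alpha> (Suc n))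
        * capacity \<P> {\<omega>\<in>space M. \<bar>\<Sum>k=1..Suc n. Xs k \<omega>\<bar> > real (Suc n) * \<epsilon>}
      \<le> G n + ennreal ((I^2 + 1) / (real (Suc n))^2)) sequentially"
      using eventually_sequentially_Suc[THEN iffD2, OF eventually_weighted_capacity_le[OF \<eta>(1)]]
      unfolding \<eta>(2) G_def I_def by simp
    show "ennreal (weight \<alpha> (Suc n)) * capacity \<P> {\<omega>\<in>space M. \<bar>\<Sum>k=1..Suc n. Xs k \<omega>\<bar> > real (Suc n) * \<epsilon>} < \<infinity>"
      for n using capacity_less_top by (simp add: ennreal_mult_less_top)
    show "(\<Sum>n. G n + ennreal ((I^2 + 1) / (real (Suc n))^2)) < \<infinity>"
      using G_finite inverse_square_finite by (subst suminf_add[symmetric]) auto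
  qed
qed

end

theorem theorem3p1:
  fixes M :: "'a measure" and H :: "('a \<Rightarrow> real) set" and E :: "('a \<Rightarrow> real) \<Rightarrow> ereal"
    and \<P> :: "'a measure set" and X :: "'a \<Rightarrow> real" and Xs :: "nat \<Rightarrow> 'a \<Rightarrow> real"
    and \<alpha> :: real
  assumes sle: "sublinear_expectation_space M H E"
    and reg: "regular_sle M H E"
    and csub: "countably_subadditive M H E"
    and rep: "represents M H E \<P>"
    and alpha: "\<alpha> > 1"
    and XH: "X \<in> H" and XsH: "\<And>n. n \<ge> 1 \<Longrightarrow> Xs n \<in> H"
    and ident: "\<And>n. n \<ge> 1 \<Longrightarrow> ident_distr E (Xs n) X"
    and indep: "\<And>n. n \<ge> 1 \<Longrightarrow> indep_of E (map Xs [1..<Suc n]) (Xs (Suc n))"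
    and mom: "ext_E E (\<lambda>\<omega>. exp ((lnp \<bar>X \<omega>\<bar>) powr \<alpha>))
                \<le> choquet M \<P> (\<lambda>\<omega>. exp ((lnp \<bar>X \<omega>\<bar>) powr \<alpha>))"
    and mom_fin: "choquet M \<P> (\<lambda>\<omega>. exp ((lnp \<bar>X \<omega>\<bar>) powr \<alpha>)) < \<infinity>"
    and mean: "E X = 0" "E (\<lambda>\<omega>. - X \<omega>) = 0"
  shows "\<forall>\<epsilon>>1. (\<Sum>n. ennreal (exp ((lnp (real (Suc n))) powr \<alpha>)
                       * (lnp (real (Suc n))) powr (\<alpha> - 1) / (real (Suc n))\<^sup>2)
            * capacity \<P> {\<omega>\<in>space M. \<bar>\<Sum>k=1..Suc n. Xs k \<omega>\<bar> > real (Suc n) * \<epsilon>}) < \<infinity>"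
proof -
  interpret centered_iid_choquet M H E \<P> X Xs \<alpha>
    using sle rep XH XsH ident indep alpha mom_fin mean
    by unfold_locales (simp_all add: exp_lnp_powr_def)
  show ?thesis
    using weighted_capacity_sum_finite by (simp add: weight_def exp_lnp_powr_def)
qed

end
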